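(* Let $P,Q$ be Bio$\beta$ systems and $S,T$ Bio$\beta$ membranes with $P\equiv Q$ and $S\equiv T$. Then for all $\Gamma_1,\Gamma_2,\tau$: $\Gamma_1;\Gamma_2\vdash P:\tau$ if and only if $\Gamma_1;\Gamma_2\vdash Q:\tau$; and for all $\Delta_1,\Delta_2,\sigma$: $\Delta_1;\Delta_2\vdash S:\sigma$ if and only if $\Delta_1;\Delta_2\vdash T:\sigma$.
   Context: Bio$\beta$ syntax. Fix a protein signature: a finite set $\mathcal P=\mathcal P_p\cup\mathcal P_{ap}$ of protein names, partitioned into polar proteins $\mathcal P_p$ and apolar proteins $\mathcal P_{ap}$, with $s:\mathcal P\to\mathbb N$ giving the number of sites of each protein; fix a countably infinite set $\mathcal N$ of names. An interface is a finite map $\rho$ from sites (natural numbers) to $\mathcal N\cup\{h,v\}$ (visible $v$, hidden $h$, or tied to a name), written as a sum, e.g. $\rho=1+\bar2+3^x$ means $\rho(1)=v,\rho(2)=h,\rho(3)=x$. Let $fn(\rho)=\mathrm{im}(\rho)\cap\mathcal N$ and $|\rho,x|=|\{i:\rho(i)=x\}|$. Systems and membranes: $P::=\diamond\mid A_p(\rho)\mid [S]\{P\}\mid P*Q\mid \nu n.P\mid \mathsf p_n;P\mid \mathsf f_n;[S]\{P\}$ ($A_p\in\mathcal P_p$), $S::=\mathbf 0\mid A_{ap}(\rho)\mid S\star T\mid \mathsf p^\perp_n;S\mid \mathsf f^\perp_n$ ($A_{ap}\in\mathcal P_{ap}$), with $[S]\{P\}$ a compartment with membrane $S$ enclosing $P$,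 $\nu n$ a binder, and $\mathsf p_n,\mathsf p^\perp_n,\mathsf f_n,\mathsf f^\perp_n$ pinch/co-pinch/fuse/co-fuse actions. $fn(\cdot)$ is as usual (including subscripts of actions). $\mathrm{Act}=\{\mathsf p_n,\mathsf p^\perp_n,\mathsf f_n,\mathsf f^\perp_n\mid n\in\mathcal N\}$ with involution $(t_n)^\perp=t^\perp_n$, extended to sets pointwise; for $X\subseteq\mathcal N$, $\tau\restriction X=\{t_x\in\tau\mid x\in X\}$. $act(K)$, the set of actions occurring in $K$, is defined by: $\emptyset$ for $\diamond,\mathbf 0$, proteins; union over compartments and compositions; $act(\nu n.P)=act(P)$; $act(t_n;K)=\{t_n\}\cup act(K)$; $act(\mathsf f^\perp_n)=\{\mathsf f^\perp_n\}$. Structural equivalence $\equiv$ is the least equivalence containing $\alpha$-equivalence such that: $*$ and $\star$ are commutative and associative with units $\diamond$ and $\mathbf 0$; $\nu n.\nu m.P\equiv\nu m.\nu n.P$ ($n\ne m$); $\nu n.\diamond\equiv\diamond$; $\nu n.(P*Q)\equiv(\nu n.P)*Q$ if $n\notin fn(Q)$; $\nu n.[S]\{P\}\equiv[S]\{\nu n.P\}$ if $n\notin fn(S)$; $\nu n.(t_m;P)\equiv t_m;\nu n.P$ for $t\in\{\mathsf p,\mathsf f\}$, $n\neq m$; and $\equiv$ is preserved by $*$, $\star$, compartment formation, and prefixes $t_n;-$ for $t\in\{\mathsf p,\mathsf p^\perp,\mathsf f\}$. Type system. A type $\tau$ is a finite subset of $\mathrm{Act}$. Judgements have the form $\Gamma_1;\Gamma_2\vdash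 K:\tau$ with $\Gamma_1,\Gamma_2$ disjoint finite sets of names (a comma denotes disjoint union). Let $ok_e(\Gamma_1,\Gamma_2,\Delta_1,\Delta_2)$ iff $(\Gamma_1\cup\Gamma_2)\cap(\Delta_1\cup\Delta_2)=\emptyset$, and $ok_t(\Gamma,\tau,\sigma)$ iff $(\tau\restriction\Gamma)^\perp=\sigma\restriction\Gamma$. Rules: (empty) $\emptyset;\emptyset\vdash\diamond:\emptyset$ and $\emptyset;\emptyset\vdash\mathbf 0:\emptyset$. (prot) if $|\rho,x|\le2$ for all $x\in fn(\rho)$, then $\{x:|\rho,x|=1\};\{x:|\rho,x|=2\}\vdash A(\rho):\emptyset$. (action) for $t\in\{\mathsf p,\mathsf p^\perp,\mathsf f\}$, if $\Gamma_1;\Gamma_2\vdash K:\emptyset$ and $act(K)=\emptyset$ then $\Gamma_1,x;\Gamma_2\vdash t_x;K:\{t_x\}$. (co-f) $x;\emptyset\vdash\mathsf f^\perp_x:\{\mathsf f^\perp_x\}$. ($\nu$-prot) if $\Gamma_1;\Gamma_2\vdash P:\tau$, $x\notin\Gamma_1$, $\tau\restriction\{x\}=\emptyset$, then $\Gamma_1;\Gamma_2\setminus\{x\}\vdash\nu x.P:\tau$. ($\nu$-action) for $t\in\{\mathsf p,\mathsf f\}$, if $\Gamma_1;\Gamma_2,x\vdash P:\tau\cup\{t_x,t_x^\perp\}$ and $\{t_x,t^\perp_x\}\cap\tau=\emptyset$ then $\Gamma_1;\Gamma_2\vdash\nu x.P:\tau$. (par) for $op\in\{*,\star\}$, if $\Gamma_1,\Gamma;\Gamma_2\vdash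 K:\tau$, $\Delta_1,\Gamma;\Delta_2\vdash L:\sigma$, $ok_e(\Gamma_1,\Gamma_2,\Delta_1,\Delta_2)$ and $ok_t(\Gamma,\tau,\sigma)$, then $\Gamma_1,\Delta_1;\Gamma_2,\Delta_2,\Gamma\vdash K\,op\,L:\tau\cup\sigma$. (cell) if $\Gamma_1,\Gamma;\Gamma_2\vdash S:\tau$, $\Gamma;\Delta_2\vdash P:\sigma$, $ok_e(\Gamma_1,\Gamma_2,\emptyset,\Delta_2)$ and $ok_t(\Gamma,\tau,\sigma)$, then $\Gamma_1;\Gamma_2,\Delta_2,\Gamma\vdash[S]\{P\}:\tau\cup\sigma$. *)

theory Defs
  imports Main "HOL-Library.Finite_Map"
begin

(* Names: the countably infinite set N is rendered as nat.
   Sites are natural numbers. *)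
type_synonym name = nat

(* values of an interface: visible v, hidden h, or tied to a name *)
datatype ival = Vis | Hid | Nm name

type_synonym iface = "(nat, ival) fmap"

(* Polar protein names have type 'pp, apolar protein names type 'ap:
   the partition P = P_p \<union> P_ap is given by the two types. *)

datatype 'ap mem =
    MNil
  | MProt 'ap iface
  | MPar "'ap mem" "'ap mem"
  | CoPinch name "'ap mem"        (* p^perp_n ; S *)
  | CoFuse name                   (* f^perp_n *)

datatype ('pp, 'ap) sys =
    SNil
  | SProt 'pp iface
  | Cell "'ap mem" "('pp, 'ap) sys"       (* [S]{P} *)
  | SPar "('pp, 'ap) sys" "('pp, 'ap) sys"
  | Nu name "('pp, 'ap) sys"
  | Pinch name "('pp, 'ap) sys"           (* p_n ; P *)
  | Fuse name "'ap mem" "('pp, 'ap) sys"  (* f_n ; [S]{P} *)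

datatype act = Ap name | Apc name | Af name | Afc name
  (* p_n, p^perp_n, f_n, f^perp_n *)

fun actname :: "act \<Rightarrow> name" where
  "actname (Ap n) = n" | "actname (Apc n) = n"
| "actname (Af n) = n" | "actname (Afc n) = n"

fun dual :: "act \<Rightarrow> act" where
  "dual (Ap n) = Apc n" | "dual (Apc n) = Ap n"
| "dual (Af n) = Afc n" | "dual (Afc n) = Af n"

definition dualset :: "act set \<Rightarrow> act set" where
  "dualset \<tau> = dual ` \<tau>"

definition restr :: "act set \<Rightarrow> name set \<Rightarrow> act set" where
  "restr \<tau> X = {a \<in> \<tau>. actname a \<in> X}"

definition fn_if :: "iface \<Rightarrow> name set" where
  "fn_if \<rho> = {x. \<exists>i. fmlookup \<rho> i = Some (Nm x)}"

definition cnt :: "iface \<Rightarrow> name \<Rightarrow> nat" where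
  "cnt \<rho> x = card {i. fmlookup \<rho> i = Some (Nm x)}"

fun fnM :: "'ap mem \<Rightarrow> name set" where
  "fnM MNil = {}"
| "fnM (MProt A \<rho>) = fn_if \<rho>"
| "fnM (MPar S T) = fnM S \<union> fnM T"
| "fnM (CoPinch n S) = insert n (fnM S)"
| "fnM (CoFuse n) = {n}"

fun fnS :: "('pp, 'ap) sys \<Rightarrow> name set" where
  "fnS SNil = {}"
| "fnS (SProt A \<rho>) = fn_if \<rho>"
| "fnS (Cell S P) = fnM S \<union> fnS P"
| "fnS (SPar P Q) = fnS P \<union> fnS Q"
| "fnS (Nu n P) = fnS P - {n}"
| "fnS (Pinch n P) = insert n (fnS P)"
| "fnS (Fuse n S P) = insert n (fnM S \<union> fnS P)"

fun actM :: "'ap mem \<Rightarrow> act set" where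
  "actM MNil = {}"
| "actM (MProt A \<rho>) = {}"
| "actM (MPar S T) = actM S \<union> actM T"
| "actM (CoPinch n S) = insert (Apc n) (actM S)"
| "actM (CoFuse n) = {Afc n}"

fun actS :: "('pp, 'ap) sys \<Rightarrow> act set" where
  "actS SNil = {}"
| "actS (SProt A \<rho>) = {}"
| "actS (Cell S P) = actM S \<union> actS P"
| "actS (SPar P Q) = actS P \<union> actS Q"
| "actS (Nu n P) = actS P"
| "actS (Pinch n P) = insert (Ap n) (actS P)"
| "actS (Fuse n S P) = insert (Af n) (actM S \<union> actS P)"

definition swapN :: "name \<Rightarrow> name \<Rightarrow> name \<Rightarrow> name" where
  "swapN a b n = (if n = a then b else if n = b then a else n)"

fun swapV :: "name \<Rightarrow> name \<Rightarrow> ival \<Rightarrow> ival" where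
  "swapV a b Vis = Vis" | "swapV a b Hid = Hid"
| "swapV a b (Nm n) = Nm (swapN a b n)"

definition swapI :: "name \<Rightarrow> name \<Rightarrow> iface \<Rightarrow> iface" where
  "swapI a b \<rho> = fmmap (swapV a b) \<rho>"

fun swapM :: "name \<Rightarrow> name \<Rightarrow> 'ap mem \<Rightarrow> 'ap mem" where
  "swapM a b MNil = MNil"
| "swapM a b (MProt A \<rho>) = MProt A (swapI a b \<rho>)"
| "swapM a b (MPar S T) = MPar (swapM a b S) (swapM a b T)"
| "swapM a b (CoPinch n S) = CoPinch (swapN a b n) (swapM a b S)"
| "swapM a b (CoFuse n) = CoFuse (swapN a b n)"

fun swapS :: "name \<Rightarrow> name \<Rightarrow> ('pp, 'ap) sys \<Rightarrow> ('pp, 'ap) sys" where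
  "swapS a b SNil = SNil"
| "swapS a b (SProt A \<rho>) = SProt A (swapI a b \<rho>)"
| "swapS a b (Cell S P) = Cell (swapM a b S) (swapS a b P)"
| "swapS a b (SPar P Q) = SPar (swapS a b P) (swapS a b Q)"
| "swapS a b (Nu n P) = Nu (swapN a b n) (swapS a b P)"
| "swapS a b (Pinch n P) = Pinch (swapN a b n) (swapS a b P)"
| "swapS a b (Fuse n S P) = Fuse (swapN a b n) (swapM a b S) (swapS a b P)"

(* alpha-equivalence on systems (membranes contain no binders, so alpha-equivalence
   on membranes is syntactic equality) *)
inductive alphaS :: "('pp, 'ap) sys \<Rightarrow> ('pp, 'ap) sys \<Rightarrow> bool" where
  a_nil: "alphaS SNil SNil"
| a_prot: "alphaS (SProt A \<rho>) (SProt A \<rho>)"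
| a_cell: "alphaS P Q \<Longrightarrow> alphaS (Cell S P) (Cell S Q)"
| a_par: "alphaS P P' \<Longrightarrow> alphaS Q Q' \<Longrightarrow> alphaS (SPar P Q) (SPar P' Q')"
| a_nu: "z \<notin> fnS (Nu x P) \<Longrightarrow> z \<notin> fnS (Nu y Q) \<Longrightarrow>
         alphaS (swapS x z P) (swapS y z Q) \<Longrightarrow> alphaS (Nu x P) (Nu y Q)"
| a_pinch: "alphaS P Q \<Longrightarrow> alphaS (Pinch n P) (Pinch n Q)"
| a_fuse: "alphaS P Q \<Longrightarrow> alphaS (Fuse n S P) (Fuse n S Q)"

inductive eqM :: "'ap mem \<Rightarrow> 'ap mem \<Rightarrow> bool" where
  m_refl: "eqM S S"
| m_sym: "eqM S T \<Longrightarrow> eqM T S"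
| m_trans: "eqM S T \<Longrightarrow> eqM T U \<Longrightarrow> eqM S U"
| m_comm: "eqM (MPar S T) (MPar T S)"
| m_assoc: "eqM (MPar (MPar S T) U) (MPar S (MPar T U))"
| m_unit: "eqM (MPar S MNil) S"
| m_par: "eqM S S' \<Longrightarrow> eqM T T' \<Longrightarrow> eqM (MPar S T) (MPar S' T')"
| m_copinch: "eqM S T \<Longrightarrow> eqM (CoPinch n S) (CoPinch n T)"

inductive eqS :: "('pp, 'ap) sys \<Rightarrow> ('pp, 'ap) sys \<Rightarrow> bool" where
  s_alpha: "alphaS P Q \<Longrightarrow> eqS P Q"
| s_refl: "eqS P P"
| s_sym: "eqS P Q \<Longrightarrow> eqS Q P"
| s_trans: "eqS P Q \<Longrightarrow> eqS Q R \<Longrightarrow> eqS P R"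
| s_comm: "eqS (SPar P Q) (SPar Q P)"
| s_assoc: "eqS (SPar (SPar P Q) R) (SPar P (SPar Q R))"
| s_unit: "eqS (SPar P SNil) P"
| s_nunu: "n \<noteq> m \<Longrightarrow> eqS (Nu n (Nu m P)) (Nu m (Nu n P))"
| s_nunil: "eqS (Nu n SNil) SNil"
| s_nupar: "n \<notin> fnS Q \<Longrightarrow> eqS (Nu n (SPar P Q)) (SPar (Nu n P) Q)"
| s_nucell: "n \<notin> fnM S \<Longrightarrow> eqS (Nu n (Cell S P)) (Cell S (Nu n P))"
| s_nupinch: "n \<noteq> m \<Longrightarrow> eqS (Nu n (Pinch m P)) (Pinch m (Nu n P))"
| s_nufuse: "n \<noteq> m \<Longrightarrow> n \<notin> fnM S \<Longrightarrow> eqS (Nu n (Fuse m S P)) (Fuse m S (Nu n P))"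
| s_par: "eqS P P' \<Longrightarrow> eqS Q Q' \<Longrightarrow> eqS (SPar P Q) (SPar P' Q')"
| s_cell: "eqM S T \<Longrightarrow> eqS P Q \<Longrightarrow> eqS (Cell S P) (Cell T Q)"
| s_pinch: "eqS P Q \<Longrightarrow> eqS (Pinch n P) (Pinch n Q)"
| s_fuse: "eqS (Cell S P) (Cell T Q) \<Longrightarrow> eqS (Fuse n S P) (Fuse n T Q)"

definition ok_e :: "name set \<Rightarrow> name set \<Rightarrow> name set \<Rightarrow> name set \<Rightarrow> bool" where
  "ok_e G1 G2 D1 D2 \<longleftrightarrow> (G1 \<union> G2) \<inter> (D1 \<union> D2) = {}"

definition ok_t :: "name set \<Rightarrow> act set \<Rightarrow> act set \<Rightarrow> bool" where
  "ok_t G \<tau> \<sigma> \<longleftrightarrow> dualset (restr \<tau> G) = restr \<sigma> G"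

(* typing of membranes:  tyM G1 G2 S tau  is  G1;G2 |- S : tau.
   A comma "X,Y" in a judgement is a disjoint union, rendered as X \<union> Y with X \<inter> Y = {}. *)
inductive tyM :: "name set \<Rightarrow> name set \<Rightarrow> 'ap mem \<Rightarrow> act set \<Rightarrow> bool" where
  tm_empty: "tyM {} {} MNil {}"
| tm_prot: "(\<forall>x \<in> fn_if \<rho>. cnt \<rho> x \<le> 2) \<Longrightarrow>
    tyM {x. cnt \<rho> x = 1} {x. cnt \<rho> x = 2} (MProt A \<rho>) {}"
| tm_copinch: "tyM G1 G2 S {} \<Longrightarrow> actM S = {} \<Longrightarrow> x \<notin> G1 \<Longrightarrow> x \<notin> G2 \<Longrightarrow>
    tyM (insert x G1) G2 (CoPinch x S) {Apc x}"
| tm_cof: "tyM {x} {} (CoFuse x) {Afc x}"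
| tm_par: "tyM (G1 \<union> G) G2 K \<tau> \<Longrightarrow> G1 \<inter> G = {} \<Longrightarrow>
    tyM (D1 \<union> G) D2 L \<sigma> \<Longrightarrow> D1 \<inter> G = {} \<Longrightarrow>
    ok_e G1 G2 D1 D2 \<Longrightarrow> ok_t G \<tau> \<sigma> \<Longrightarrow>
    G1 \<inter> D1 = {} \<Longrightarrow> G2 \<inter> D2 = {} \<Longrightarrow> G2 \<inter> G = {} \<Longrightarrow> D2 \<inter> G = {} \<Longrightarrow>
    tyM (G1 \<union> D1) (G2 \<union> D2 \<union> G) (MPar K L) (\<tau> \<union> \<sigma>)"

inductive tyS :: "name set \<Rightarrow> name set \<Rightarrow> ('pp, 'ap) sys \<Rightarrow> act set \<Rightarrow> bool" where
  ts_empty: "tyS {} {} SNil {}"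
| ts_prot: "(\<forall>x \<in> fn_if \<rho>. cnt \<rho> x \<le> 2) \<Longrightarrow>
    tyS {x. cnt \<rho> x = 1} {x. cnt \<rho> x = 2} (SProt A \<rho>) {}"
| ts_pinch: "tyS G1 G2 P {} \<Longrightarrow> actS P = {} \<Longrightarrow> x \<notin> G1 \<Longrightarrow> x \<notin> G2 \<Longrightarrow>
    tyS (insert x G1) G2 (Pinch x P) {Ap x}"
| ts_fuse: "tyS G1 G2 (Cell S P) {} \<Longrightarrow> actS (Cell S P) = {} \<Longrightarrow> x \<notin> G1 \<Longrightarrow> x \<notin> G2 \<Longrightarrow>
    tyS (insert x G1) G2 (Fuse x S P) {Af x}"
| ts_nuprot: "tyS G1 G2 P \<tau> \<Longrightarrow> x \<notin> G1 \<Longrightarrow> restr \<tau> {x} = {} \<Longrightarrow>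
    tyS G1 (G2 - {x}) (Nu x P) \<tau>"
| ts_nupinch: "tyS G1 (insert x G2) P (\<tau> \<union> {Ap x, Apc x}) \<Longrightarrow> x \<notin> G2 \<Longrightarrow>
    {Ap x, Apc x} \<inter> \<tau> = {} \<Longrightarrow> tyS G1 G2 (Nu x P) \<tau>"
| ts_nufuse: "tyS G1 (insert x G2) P (\<tau> \<union> {Af x, Afc x}) \<Longrightarrow> x \<notin> G2 \<Longrightarrow>
    {Af x, Afc x} \<inter> \<tau> = {} \<Longrightarrow> tyS G1 G2 (Nu x P) \<tau>"
| ts_par: "tyS (G1 \<union> G) G2 K \<tau> \<Longrightarrow> G1 \<inter> G = {} \<Longrightarrow>
    tyS (D1 \<union> G) D2 L \<sigma> \<Longrightarrow> D1 \<inter> G = {} \<Longrightarrow>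
    ok_e G1 G2 D1 D2 \<Longrightarrow> ok_t G \<tau> \<sigma> \<Longrightarrow>
    G1 \<inter> D1 = {} \<Longrightarrow> G2 \<inter> D2 = {} \<Longrightarrow> G2 \<inter> G = {} \<Longrightarrow> D2 \<inter> G = {} \<Longrightarrow>
    tyS (G1 \<union> D1) (G2 \<union> D2 \<union> G) (SPar K L) (\<tau> \<union> \<sigma>)"
| ts_cell: "tyM (G1 \<union> G) G2 S \<tau> \<Longrightarrow> G1 \<inter> G = {} \<Longrightarrow>
    tyS G D2 P \<sigma> \<Longrightarrow>
    ok_e G1 G2 {} D2 \<Longrightarrow> ok_t G \<tau> \<sigma> \<Longrightarrow>
    G2 \<inter> D2 = {} \<Longrightarrow> G2 \<inter> G = {} \<Longrightarrow> D2 \<inter> G = {} \<Longrightarrow>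
    tyS G1 (G2 \<union> D2 \<union> G) (Cell S P) (\<tau> \<union> \<sigma>)"

end

theory Submission
  imports Defs
begin

text \<open>
  The proof is denotational.  To every system P (membrane S) we associate the relation
  typingsS P (typingsM S) of all triples (G1, G2, tau) with G1;G2 |- P : tau, and show that this
  relation is computed compositionally from the relations of the immediate subterms by a few
  operators on typing relations: a binary join (parallel composition, and cells as a join whose
  inner linear names are all shared with the membrane), restriction, and prefixing.  Each axiom
  of structural equivalence then becomes an algebraic law of these operators (commutativity,
  associativity and unit of the join, commutation of restrictions with each other, with joins
  and with prefixes, fresh renaming of a bound name), so the typing relation is an invariant of
  structural equivalence, which is the theorem.

  The laws hold only for relations whose typings are well-formed: every action name is a
  declared name, a linear name carries at most one action and a bound name either none or a
  dual pair.  We therefore first show that every derivable typing is well-formed, and that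
  typing is equivariant under swapping names (needed for alpha-conversion).
\<close>

unbundle lattice_syntax

subsection \<open>Actions, duality and restriction to names\<close>

lemma dual_dual [simp]: "dual (dual a) = a"
  by (cases a) auto

lemma actname_dual [simp]: "actname (dual a) = actname a"
  by (cases a) auto

lemma dual_eq_iff [simp]: "dual a = dual b \<longleftrightarrow> a = b"
  by (metis dual_dual)

lemma pairs_disjoint:
  assumes ne: "actname p \<noteq> actname q"
  shows "{p, dual p} \<inter> {q, dual q} = {}"
proof (rule ccontr)
  assume "{p, dual p} \<inter> {q, dual q} \<noteq> {}"
  then obtain a where "a \<in> {p, dual p}" "a \<in> {q, dual q}" by blast
  then have "actname a = actname p" "actname a = actname q" by auto
  with ne show False by simp
qed

lemma restr_Un: "restr (\<tau> \<union> \<sigma>) X = restr \<tau> X \<union> restr \<sigma> X"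
  by (auto simp: restr_def)

lemma restr_pair_other:
  assumes "actname p = x" and "x \<notin> G"
  shows "restr (\<sigma> \<union> {p, dual p}) G = restr \<sigma> G" and "restr (\<sigma> - {p, dual p}) G = restr \<sigma> G"
  using assms by (auto simp: restr_def)

lemma ok_t_sym: "ok_t G \<tau> \<sigma> \<Longrightarrow> ok_t G \<sigma> \<tau>"
  unfolding ok_t_def dualset_def by (drule sym) (simp add: image_image)

lemma ok_t_iff_names:
  "ok_t G \<tau> \<sigma> \<longleftrightarrow> (\<forall>x\<in>G. restr \<sigma> {x} = dualset (restr \<tau> {x}))"
proof
  assume ok: "ok_t G \<tau> \<sigma>"
  show "\<forall>x\<in>G. restr \<sigma> {x} = dualset (restr \<tau> {x})"
  proof
    fix x assume "x \<in> G"
    have "restr \<sigma> {x} = {a \<in> restr \<sigma> G. actname a = x}"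
      using \<open>x \<in> G\<close> by (auto simp: restr_def)
    also have "\<dots> = {a \<in> dual ` restr \<tau> G. actname a = x}"
      using ok by (simp add: ok_t_def dualset_def)
    also have "\<dots> = dualset (restr \<tau> {x})"
      using \<open>x \<in> G\<close> by (auto simp: restr_def dualset_def)
    finally show "restr \<sigma> {x} = dualset (restr \<tau> {x})" .
  qed
next
  assume names: "\<forall>x\<in>G. restr \<sigma> {x} = dualset (restr \<tau> {x})"
  have "restr \<sigma> G = (\<Union>x\<in>G. restr \<sigma> {x})"
    by (auto simp: restr_def)
  also have "\<dots> = (\<Union>x\<in>G. dualset (restr \<tau> {x}))"
    using names by simp
  also have "\<dots> = dualset (restr \<tau> G)"
    by (auto simp: restr_def dualset_def)
  finally show "ok_t G \<tau> \<sigma>"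
    by (simp add: ok_t_def)
qed

lemma ok_t_name: "ok_t G \<tau> \<sigma> \<Longrightarrow> x \<in> G \<Longrightarrow> restr \<sigma> {x} = dualset (restr \<tau> {x})"
  by (simp add: ok_t_iff_names)

subsection \<open>Well-formed typings\<close>

definition wellformed :: "name set \<Rightarrow> name set \<Rightarrow> act set \<Rightarrow> bool" where
  "wellformed A B \<tau> \<longleftrightarrow> A \<inter> B = {} \<and>
     (\<forall>x. (x \<notin> A \<union> B \<longrightarrow> restr \<tau> {x} = {}) \<and>
          (x \<in> A \<longrightarrow> (\<forall>a \<in> restr \<tau> {x}. restr \<tau> {x} = {a})) \<and>
          (x \<in> B \<longrightarrow> (\<forall>a \<in> restr \<tau> {x}. restr \<tau> {x} = {a, dual a})))"

lemma wfI:
  assumes "A \<inter> B = {}"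
    and "\<And>x. x \<notin> A \<union> B \<Longrightarrow> restr \<tau> {x} = {}"
    and "\<And>x a. x \<in> A \<Longrightarrow> a \<in> restr \<tau> {x} \<Longrightarrow> restr \<tau> {x} = {a}"
    and "\<And>x a. x \<in> B \<Longrightarrow> a \<in> restr \<tau> {x} \<Longrightarrow> restr \<tau> {x} = {a, dual a}"
  shows "wellformed A B \<tau>"
  using assms unfolding wellformed_def by blast

lemma wf_disj: "wellformed A B \<tau> \<Longrightarrow> A \<inter> B = {}"
  by (simp add: wellformed_def)

lemma wf_outside: "wellformed A B \<tau> \<Longrightarrow> x \<notin> A \<union> B \<Longrightarrow> restr \<tau> {x} = {}"
  by (simp add: wellformed_def)

lemma wf_linear: "wellformed A B \<tau> \<Longrightarrow> x \<in> A \<Longrightarrow> a \<in> restr \<tau> {x} \<Longrightarrow> restr \<tau> {x} = {a}"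
  unfolding wellformed_def by blast

lemma wf_bound: "wellformed A B \<tau> \<Longrightarrow> x \<in> B \<Longrightarrow> a \<in> restr \<tau> {x} \<Longrightarrow> restr \<tau> {x} = {a, dual a}"
  unfolding wellformed_def by blast

lemma wf_actname: "wellformed A B \<tau> \<Longrightarrow> a \<in> \<tau> \<Longrightarrow> actname a \<in> A \<union> B"
  using wf_outside[of A B \<tau> "actname a"] by (auto simp: restr_def)

text \<open>The
  composite has linear names symdiff A1 A2 and bound names B1 \<union> B2 \<union> (A1 \<inter> A2).\<close>

definition compatible :: "name set \<Rightarrow> name set \<Rightarrow> act set \<Rightarrow> name set \<Rightarrow> name set \<Rightarrow> act set \<Rightarrow> bool" where
  "compatible A1 B1 \<tau> A2 B2 \<sigma> \<longleftrightarrow>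
     B1 \<inter> A2 = {} \<and> B1 \<inter> B2 = {} \<and> A1 \<inter> B2 = {} \<and> ok_t (A1 \<inter> A2) \<tau> \<sigma>"

abbreviation symdiff :: "'a set \<Rightarrow> 'a set \<Rightarrow> 'a set" where
  "symdiff A B \<equiv> (A - B) \<union> (B - A)"

lemma compatibleI:
  "B1 \<inter> A2 = {} \<Longrightarrow> B1 \<inter> B2 = {} \<Longrightarrow> A1 \<inter> B2 = {} \<Longrightarrow> ok_t (A1 \<inter> A2) \<tau> \<sigma> \<Longrightarrow>
   compatible A1 B1 \<tau> A2 B2 \<sigma>"
  by (simp add: compatible_def)

lemma compatible_empty: "compatible A B \<tau> {} {} {}"
  by (simp add: compatible_def ok_t_def restr_def dualset_def)

lemma compatible_sym: "compatible A1 B1 \<tau> A2 B2 \<sigma> \<longleftrightarrow> compatible A2 B2 \<sigma> A1 B1 \<tau>"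
  unfolding compatible_def by (auto simp: Int_commute intro: ok_t_sym)

text \<open>Joining two well-formed compatible typings: on a name used by only one side nothing
  changes, and on a shared name the two single occurrences form a dual pair.\<close>

lemma restr_join_left:
  assumes "wellformed A2 B2 \<sigma>" and "x \<notin> A2 \<union> B2"
  shows "restr (\<tau> \<union> \<sigma>) {x} = restr \<tau> {x}"
  using wf_outside[OF assms] by (simp add: restr_Un)

lemma single_dual_pair:
  assumes single: "\<forall>b\<in>R. R = {b}" and a: "a \<in> R \<union> dualset R"
  shows "R \<union> dualset R = {a, dual a}"
proof -
  from a obtain b where b: "b \<in> R" "a = b \<or> a = dual b"
    unfolding dualset_def by blast
  have R: "R = {b}" using single b(1) by blast
  show ?thesis using b(2) unfolding R dualset_def by auto
qed

lemma wf_join_linear: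
  assumes w1: "wellformed A1 B1 \<tau>" and w2: "wellformed A2 B2 \<sigma>"
    and c: "compatible A1 B1 \<tau> A2 B2 \<sigma>"
    and x: "x \<in> A1 - A2" and a: "a \<in> restr (\<tau> \<union> \<sigma>) {x}"
  shows "restr (\<tau> \<union> \<sigma>) {x} = {a}"
proof -
  have "x \<notin> A2 \<union> B2" using x c unfolding compatible_def by blast
  then have "restr (\<tau> \<union> \<sigma>) {x} = restr \<tau> {x}" by (rule restr_join_left[OF w2])
  then show ?thesis using wf_linear[OF w1, of x a] x a by simp
qed

lemma wf_join_bound:
  assumes w1: "wellformed A1 B1 \<tau>" and w2: "wellformed A2 B2 \<sigma>"
    and c: "compatible A1 B1 \<tau> A2 B2 \<sigma>"
    and x: "x \<in> B1 \<union> (A1 \<inter> A2)" and a: "a \<in> restr (\<tau> \<union> \<sigma>) {x}"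
  shows "restr (\<tau> \<union> \<sigma>) {x} = {a, dual a}"
proof (cases "x \<in> B1")
  case True
  then have "x \<notin> A2 \<union> B2" using c unfolding compatible_def by blast
  then have "restr (\<tau> \<union> \<sigma>) {x} = restr \<tau> {x}" by (rule restr_join_left[OF w2])
  then show ?thesis using wf_bound[OF w1 True, of a] a by simp
next
  case False
  then have shared: "x \<in> A1 \<inter> A2" using x by blast
  have split: "restr (\<tau> \<union> \<sigma>) {x} = restr \<tau> {x} \<union> dualset (restr \<tau> {x})"
    using ok_t_name[of "A1 \<inter> A2" \<tau> \<sigma> x] c shared by (simp add: compatible_def restr_Un)
  have single: "\<forall>b\<in>restr \<tau> {x}. restr \<tau> {x} = {b}"
    using wf_linear[OF w1, of x] shared by blast
  have "a \<in> restr \<tau> {x} \<union> dualset (restr \<tau> {x})" using a split by simp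
  then have "restr \<tau> {x} \<union> dualset (restr \<tau> {x}) = {a, dual a}"
    by (rule single_dual_pair[OF single])
  with split show ?thesis by simp
qed

lemma wf_join_disj:
  assumes w1: "wellformed A1 B1 \<tau>" and w2: "wellformed A2 B2 \<sigma>"
    and c: "compatible A1 B1 \<tau> A2 B2 \<sigma>"
  shows "symdiff A1 A2 \<inter> (B1 \<union> B2 \<union> (A1 \<inter> A2)) = {}"
  using wf_disj[OF w1] wf_disj[OF w2] c unfolding compatible_def by blast

lemma wf_join:
  assumes w1: "wellformed A1 B1 \<tau>" and w2: "wellformed A2 B2 \<sigma>"
    and c: "compatible A1 B1 \<tau> A2 B2 \<sigma>"
  shows "wellformed (symdiff A1 A2) (B1 \<union> B2 \<union> (A1 \<inter> A2)) (\<tau> \<union> \<sigma>)"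
proof (rule wfI)
  show "symdiff A1 A2 \<inter> (B1 \<union> B2 \<union> (A1 \<inter> A2)) = {}"
    by (rule wf_join_disj[OF w1 w2 c])
next
  fix x assume "x \<notin> symdiff A1 A2 \<union> (B1 \<union> B2 \<union> (A1 \<inter> A2))"
  then have "x \<notin> A1 \<union> B1" "x \<notin> A2 \<union> B2" by blast+
  then show "restr (\<tau> \<union> \<sigma>) {x} = {}"
    using wf_outside[OF w1] wf_outside[OF w2] by (simp add: restr_Un)
next
  have c': "compatible A2 B2 \<sigma> A1 B1 \<tau>" using c by (simp add: compatible_sym)
  fix x a assume x: "x \<in> symdiff A1 A2" and a: "a \<in> restr (\<tau> \<union> \<sigma>) {x}"
  show "restr (\<tau> \<union> \<sigma>) {x} = {a}"
  proof (cases "x \<in> A1")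
    case True
    then show ?thesis using wf_join_linear[OF w1 w2 c _ a] x by blast
  next
    case False
    then show ?thesis using wf_join_linear[OF w2 w1 c', of x a] x a
      unfolding Un_commute[of \<sigma> \<tau>] by blast
  qed
next
  have c': "compatible A2 B2 \<sigma> A1 B1 \<tau>" using c by (simp add: compatible_sym)
  fix x a assume x: "x \<in> B1 \<union> B2 \<union> (A1 \<inter> A2)" and a: "a \<in> restr (\<tau> \<union> \<sigma>) {x}"
  show "restr (\<tau> \<union> \<sigma>) {x} = {a, dual a}"
  proof (cases "x \<in> B2")
    case False
    then show ?thesis using wf_join_bound[OF w1 w2 c _ a] x by blast
  next
    case True
    then show ?thesis using wf_join_bound[OF w2 w1 c', of x a] a
      unfolding Un_commute[of \<sigma> \<tau>] by blast
  qed
qed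

text \<open>The side conditions of the rules for parallel composition and cells say exactly that the
  two component typings are compatible, with the shared names being their common linear names.\<close>

lemma compatible_of_rule:
  assumes "G1 \<inter> G = {}" "D1 \<inter> G = {}" "ok_e G1 G2 D1 D2" "ok_t G \<tau> \<sigma>"
    "G1 \<inter> D1 = {}" "G2 \<inter> D2 = {}" "G2 \<inter> G = {}" "D2 \<inter> G = {}"
  shows "compatible (G1 \<union> G) G2 \<tau> (D1 \<union> G) D2 \<sigma>"
    and "G1 \<union> D1 = symdiff (G1 \<union> G) (D1 \<union> G)"
    and "G2 \<union> D2 \<union> G = G2 \<union> D2 \<union> ((G1 \<union> G) \<inter> (D1 \<union> G))"
proof -
  have shared: "(G1 \<union> G) \<inter> (D1 \<union> G) = G" using assms(1,2,5) by blast
  show "compatible (G1 \<union> G) G2 \<tau> (D1 \<union> G) D2 \<sigma>"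
    using assms unfolding compatible_def shared ok_e_def by auto
  show "G1 \<union> D1 = symdiff (G1 \<union> G) (D1 \<union> G)" "G2 \<union> D2 \<union> G = G2 \<union> D2 \<union> ((G1 \<union> G) \<inter> (D1 \<union> G))"
    using assms(1,2,5) by blast+
qed

lemma rule_of_compatible:
  assumes "compatible A1 B1 \<tau> A2 B2 \<sigma>"
  shows "ok_e (A1 - A2) B1 (A2 - A1) B2" "ok_t (A1 \<inter> A2) \<tau> \<sigma>"
    "B1 \<inter> B2 = {}" "B1 \<inter> (A1 \<inter> A2) = {}" "B2 \<inter> (A1 \<inter> A2) = {}"
  using assms by (auto simp: compatible_def ok_e_def)

lemma wf_prot: "wellformed {x. cnt \<rho> x = 1} {x. cnt \<rho> x = 2} {}"
  by (auto simp: wellformed_def restr_def)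

lemma wf_prefix: "wellformed A B {} \<Longrightarrow> x \<notin> A \<union> B \<Longrightarrow> actname p = x \<Longrightarrow> wellformed (insert x A) B {p}"
  unfolding wellformed_def restr_def by auto

lemma wf_hide: "wellformed A B \<tau> \<Longrightarrow> x \<notin> A \<Longrightarrow> restr \<tau> {x} = {} \<Longrightarrow> wellformed A (B - {x}) \<tau>"
  unfolding wellformed_def by blast

lemma wf_bind:
  assumes w: "wellformed A (insert x B) (\<tau> \<union> {p, dual p})" and px: "actname p = x"
    and xB: "x \<notin> B" and fresh: "{p, dual p} \<inter> \<tau> = {}"
  shows "wellformed A B \<tau>"
proof -
  have "p \<in> restr (\<tau> \<union> {p, dual p}) {x}" using px by (simp add: restr_def)
  then have "restr (\<tau> \<union> {p, dual p}) {x} = {p, dual p}"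
    using wf_bound[OF w] by blast
  moreover have "restr \<tau> {x} \<subseteq> restr (\<tau> \<union> {p, dual p}) {x}" "restr \<tau> {x} \<subseteq> \<tau>"
    by (auto simp: restr_def)
  ultimately have no_x: "restr \<tau> {x} = {}" using fresh by blast
  have same: "restr (\<tau> \<union> {p, dual p}) {y} = restr \<tau> {y}" if "y \<noteq> x" for y
    using that px by (auto simp: restr_def)
  show ?thesis
  proof (rule wfI)
    show "A \<inter> B = {}" using wf_disj[OF w] by blast
  next
    fix y assume "y \<notin> A \<union> B"
    then show "restr \<tau> {y} = {}"
      using no_x same[of y] wf_outside[OF w, of y] by (cases "y = x") auto
  next
    fix y a assume "y \<in> A" "a \<in> restr \<tau> {y}"
    then show "restr \<tau> {y} = {a}"
      using no_x same[of y] wf_linear[OF w, of y a] by (cases "y = x") auto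
  next
    fix y a assume "y \<in> B" "a \<in> restr \<tau> {y}"
    then show "restr \<tau> {y} = {a, dual a}"
      using no_x same[of y] wf_bound[OF w, of y a] by (cases "y = x") auto
  qed
qed

lemma cnt_fn:
  assumes "cnt \<rho> x = Suc n"
  shows "x \<in> fn_if \<rho>"
proof -
  have "{i. fmlookup \<rho> i = Some (Nm x)} \<noteq> {}"
  proof
    assume "{i. fmlookup \<rho> i = Some (Nm x)} = {}"
    with assms show False by (simp add: cnt_def)
  qed
  then show ?thesis by (auto simp: fn_if_def)
qed

lemma wf_par_rule:
  assumes "wellformed (G1 \<union> G) G2 \<tau>" "wellformed (D1 \<union> G) D2 \<sigma>"
    and "G1 \<inter> G = {}" "D1 \<inter> G = {}" "ok_e G1 G2 D1 D2" "ok_t G \<tau> \<sigma>"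
    "G1 \<inter> D1 = {}" "G2 \<inter> D2 = {}" "G2 \<inter> G = {}" "D2 \<inter> G = {}"
  shows "wellformed (G1 \<union> D1) (G2 \<union> D2 \<union> G) (\<tau> \<union> \<sigma>)"
  using wf_join[OF assms(1,2) compatible_of_rule(1)[OF assms(3-10)]]
  unfolding compatible_of_rule(2,3)[OF assms(3-10), symmetric] .

lemma tyM_wf: "tyM A B S \<tau> \<Longrightarrow> wellformed A B \<tau> \<and> A \<union> B \<subseteq> fnM S \<and> \<tau> \<subseteq> actM S"
proof (induction rule: tyM.induct)
  case tm_empty
  then show ?case by (simp add: wellformed_def restr_def)
next
  case (tm_prot \<rho> A)
  then show ?case using wf_prot cnt_fn by (auto simp: numeral_2_eq_2)
next
  case (tm_copinch G1 G2 S x)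
  then show ?case using wf_prefix[of G1 G2 x "Apc x"] by auto
next
  case (tm_cof x)
  then show ?case using wf_prefix[of "{}" "{}" x "Afc x"] by (auto simp: wellformed_def restr_def)
next
  case (tm_par G1 G G2 K \<tau> D1 D2 L \<sigma>)
  have "wellformed (G1 \<union> D1) (G2 \<union> D2 \<union> G) (\<tau> \<union> \<sigma>)"
    using tm_par.IH tm_par.hyps by (intro wf_par_rule) auto
  then show ?case using tm_par.IH by auto
qed

lemma tyS_wf: "tyS A B P \<tau> \<Longrightarrow> wellformed A B \<tau> \<and> A \<union> B \<subseteq> fnS P \<and> \<tau> \<subseteq> actS P"
proof (induction rule: tyS.induct)
  case ts_empty
  then show ?case by (simp add: wellformed_def restr_def)
next
  case (ts_prot \<rho> A)
  then show ?case using wf_prot cnt_fn by (auto simp: numeral_2_eq_2)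
next
  case (ts_pinch G1 G2 P x)
  then show ?case using wf_prefix[of G1 G2 x "Ap x"] by auto
next
  case (ts_fuse G1 G2 S P x)
  then show ?case using wf_prefix[of G1 G2 x "Af x"] by auto
next
  case (ts_nuprot G1 G2 P \<tau> x)
  then show ?case using wf_hide[of G1 G2 \<tau> x] by (auto simp: restr_def)
next
  case (ts_nupinch G1 x G2 P \<tau>)
  then show ?case using wf_bind[of G1 x G2 \<tau> "Ap x"] wf_disj by auto
next
  case (ts_nufuse G1 x G2 P \<tau>)
  then show ?case using wf_bind[of G1 x G2 \<tau> "Af x"] wf_disj by auto
next
  case (ts_par G1 G G2 K \<tau> D1 D2 L \<sigma>)
  have "wellformed (G1 \<union> D1) (G2 \<union> D2 \<union> G) (\<tau> \<union> \<sigma>)"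
    using ts_par.IH ts_par.hyps by (intro wf_par_rule) auto
  then show ?case using ts_par.IH by auto
next
  case (ts_cell G1 G G2 S \<tau> D2 P \<sigma>)
  have "wellformed (G1 \<union> {}) (G2 \<union> D2 \<union> G) (\<tau> \<union> \<sigma>)"
    using tyM_wf[OF ts_cell.hyps(1)] ts_cell.IH ts_cell.hyps by (intro wf_par_rule) auto
  then show ?case using tyM_wf[OF ts_cell.hyps(1)] ts_cell.IH by auto
qed

subsection \<open>Equivariance under swapping names\<close>

lemma swapN_swapN [simp]: "swapN a b (swapN a b n) = n"
  by (auto simp: swapN_def)

lemma swapN_left [simp]: "swapN a b a = b"
  by (simp add: swapN_def)

lemma swapN_eq_iff [simp]: "swapN a b n = swapN a b m \<longleftrightarrow> n = m"
  by (metis swapN_swapN)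

lemma inj_swapN [simp]: "inj (swapN a b)"
  by (simp add: inj_def)

lemma swapN_commute: "swapN a b = swapN b a"
  by (auto simp: swapN_def fun_eq_iff)

lemma swapN_fixes: "x \<notin> A \<Longrightarrow> z \<notin> A \<Longrightarrow> swapN x z ` A = A"
  by (auto simp: swapN_def image_iff)

lemma swapN_Collect: "swapN a b ` {x. P x} = {x. P (swapN a b x)}"
  by (auto simp: image_iff) (metis swapN_swapN)

fun swapA :: "name \<Rightarrow> name \<Rightarrow> act \<Rightarrow> act" where
  "swapA a b (Ap n) = Ap (swapN a b n)"
| "swapA a b (Apc n) = Apc (swapN a b n)"
| "swapA a b (Af n) = Af (swapN a b n)"
| "swapA a b (Afc n) = Afc (swapN a b n)"

lemma actname_swapA [simp]: "actname (swapA a b c) = swapN a b (actname c)"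
  by (cases c) auto

lemma dual_swapA [simp]: "dual (swapA a b c) = swapA a b (dual c)"
  by (cases c) auto

lemma swapA_swapA [simp]: "swapA a b (swapA a b c) = c"
  by (cases c) auto

lemma inj_swapA [simp]: "inj (swapA a b)"
  by (metis injI swapA_swapA)

lemma swapA_fixes:
  assumes "\<And>c. c \<in> \<tau> \<Longrightarrow> actname c \<noteq> x \<and> actname c \<noteq> z"
  shows "swapA x z ` \<tau> = \<tau>"
proof -
  have "swapA x z c = c" if "c \<in> \<tau>" for c
    using assms[OF that] by (cases c) (auto simp: swapN_def)
  then show ?thesis by force
qed

lemma restr_swap: "restr (swapA a b ` \<tau>) (swapN a b ` X) = swapA a b ` restr \<tau> X"
  by (auto simp: restr_def image_iff)

lemma ok_t_swap:
  assumes "ok_t G \<tau> \<sigma>"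
  shows "ok_t (swapN a b ` G) (swapA a b ` \<tau>) (swapA a b ` \<sigma>)"
proof -
  have "dual ` swapA a b ` restr \<tau> G = swapA a b ` dual ` restr \<tau> G"
    by (simp add: image_image)
  then show ?thesis using assms by (simp add: ok_t_def dualset_def restr_swap)
qed

lemma ok_e_swap:
  "ok_e G1 G2 D1 D2 \<Longrightarrow> ok_e (swapN a b ` G1) (swapN a b ` G2) (swapN a b ` D1) (swapN a b ` D2)"
  by (auto simp: ok_e_def)

lemma cnt_swap: "cnt (swapI a b \<rho>) x = cnt \<rho> (swapN a b x)"
proof -
  have "swapV a b v = Nm x \<longleftrightarrow> v = Nm (swapN a b x)" for v
    by (cases v) auto
  then show ?thesis by (simp add: cnt_def swapI_def fmlookup_map)
qed

lemma fn_if_swap: "fn_if (swapI a b \<rho>) = swapN a b ` fn_if \<rho>"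
proof -
  have "swapV a b v = Nm x \<longleftrightarrow> v = Nm (swapN a b x)" for v x
    by (cases v) auto
  then show ?thesis
    by (simp add: fn_if_def swapI_def fmlookup_map swapN_Collect)
qed

lemma fnM_swap: "fnM (swapM a b S) = swapN a b ` fnM S"
  by (induction S) (auto simp: fn_if_swap)

lemma fnS_swap: "fnS (swapS a b P) = swapN a b ` fnS P"
  by (induction P) (auto simp: fn_if_swap fnM_swap image_set_diff[OF inj_swapN])

lemma actM_swap: "actM (swapM a b S) = swapA a b ` actM S"
  by (induction S) auto

lemma actS_swap: "actS (swapS a b P) = swapA a b ` actS P"
  by (induction P) (auto simp: actM_swap)

lemma swapS_commute: "swapS a b P = swapS b a P"
proof -
  have "swapV a b v = swapV b a v" for v by (cases v) (auto simp: swapN_commute)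
  then have "swapV a b = swapV b a" by (rule ext)
  then have swapI: "swapI a b \<rho> = swapI b a \<rho>" for \<rho> by (simp only: swapI_def)
  moreover have "swapM a b S = swapM b a S" for S :: "'ap mem"
    by (induction S) (auto simp: swapN_commute swapI)
  ultimately show ?thesis
    by (induction P) (auto simp: swapN_commute)
qed

lemma swapS_swapS [simp]: "swapS a b (swapS a b P) = P"
proof -
  have "swapV a b (swapV a b v) = v" for v by (cases v) auto
  then have "swapI a b (swapI a b \<rho>) = \<rho>" for \<rho>
    by (simp add: swapI_def fmap.map_comp comp_def fmap.map_ident)
  moreover have "swapM a b (swapM a b S) = S" for S :: "'ap mem"
    by (induction S) (auto simp: \<open>\<And>\<rho>. swapI a b (swapI a b \<rho>) = \<rho>\<close>)
  ultimately show ?thesis by (induction P) auto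
qed

lemma swapN_disj: "A \<inter> B = {} \<Longrightarrow> swapN a b ` A \<inter> swapN a b ` B = {}"
  by auto

lemma swap_prot_sets: "swapN a b ` {x. cnt \<rho> x = k} = {x. cnt (swapI a b \<rho>) x = k}"
  by (simp add: swapN_Collect cnt_swap)

lemma swap_prot_ok: "\<forall>x\<in>fn_if \<rho>. cnt \<rho> x \<le> 2 \<Longrightarrow> \<forall>x\<in>fn_if (swapI a b \<rho>). cnt (swapI a b \<rho>) x \<le> 2"
  by (auto simp: fn_if_swap cnt_swap)

lemma tyM_swap: "tyM A B S \<tau> \<Longrightarrow> tyM (swapN a b ` A) (swapN a b ` B) (swapM a b S) (swapA a b ` \<tau>)"
proof (induction rule: tyM.induct)
  case tm_empty
  then show ?case by (simp add: tyM.tm_empty)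
next
  case (tm_prot \<rho> A)
  show ?case
    unfolding swap_prot_sets swapM.simps image_empty
    by (rule tyM.tm_prot[OF swap_prot_ok[OF tm_prot]])
next
  case (tm_copinch G1 G2 S x)
  then show ?case by (auto intro!: tyM.tm_copinch simp: actM_swap)
next
  case (tm_cof x)
  then show ?case by (simp add: tyM.tm_cof)
next
  case (tm_par G1 G G2 K \<tau> D1 D2 L \<sigma>)
  show ?case
    unfolding image_Un swapM.simps
    by (rule tyM.tm_par[OF tm_par.IH(1)[unfolded image_Un] _ tm_par.IH(2)[unfolded image_Un]])
      (use tm_par.hyps in \<open>simp_all add: swapN_disj ok_t_swap ok_e_swap\<close>)
qed

lemma tyS_swap: "tyS A B P \<tau> \<Longrightarrow> tyS (swapN a b ` A) (swapN a b ` B) (swapS a b P) (swapA a b ` \<tau>)"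
proof (induction rule: tyS.induct)
  case ts_empty
  then show ?case by (simp add: tyS.ts_empty)
next
  case (ts_prot \<rho> A)
  show ?case
    unfolding swap_prot_sets swapS.simps image_empty
    by (rule tyS.ts_prot[OF swap_prot_ok[OF ts_prot]])
next
  case (ts_pinch G1 G2 P x)
  then show ?case by (auto intro!: tyS.ts_pinch simp: actS_swap)
next
  case (ts_fuse G1 G2 S P x)
  then show ?case by (auto intro!: tyS.ts_fuse simp: actS_swap actM_swap)
next
  case (ts_nuprot G1 G2 P \<tau> x)
  have "restr (swapA a b ` \<tau>) (swapN a b ` {x}) = {}"
    using ts_nuprot.hyps(3) restr_swap[of a b \<tau> "{x}"] by simp
  then show ?case using ts_nuprot
    by (auto intro!: tyS.ts_nuprot simp: image_set_diff[OF inj_swapN])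
next
  case (ts_nupinch G1 x G2 P \<tau>)
  have "{Ap (swapN a b x), Apc (swapN a b x)} \<inter> swapA a b ` \<tau> = swapA a b ` ({Ap x, Apc x} \<inter> \<tau>)"
    by (simp add: image_Int[OF inj_swapA])
  then have "{Ap (swapN a b x), Apc (swapN a b x)} \<inter> swapA a b ` \<tau> = {}"
    using ts_nupinch.hyps(3) by simp
  then show ?case unfolding swapS.simps using ts_nupinch.IH ts_nupinch.hyps(2)
    by (intro tyS.ts_nupinch) (simp_all add: image_Un inj_image_mem_iff)
next
  case (ts_nufuse G1 x G2 P \<tau>)
  have "{Af (swapN a b x), Afc (swapN a b x)} \<inter> swapA a b ` \<tau> = swapA a b ` ({Af x, Afc x} \<inter> \<tau>)"
    by (simp add: image_Int[OF inj_swapA])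
  then have "{Af (swapN a b x), Afc (swapN a b x)} \<inter> swapA a b ` \<tau> = {}"
    using ts_nufuse.hyps(3) by simp
  then show ?case unfolding swapS.simps using ts_nufuse.IH ts_nufuse.hyps(2)
    by (intro tyS.ts_nufuse) (simp_all add: image_Un inj_image_mem_iff)
next
  case (ts_par G1 G G2 K \<tau> D1 D2 L \<sigma>)
  show ?case
    unfolding image_Un swapS.simps
    by (rule tyS.ts_par[OF ts_par.IH(1)[unfolded image_Un] _ ts_par.IH(2)[unfolded image_Un]])
      (use ts_par.hyps in \<open>simp_all add: swapN_disj ok_t_swap ok_e_swap\<close>)
next
  case (ts_cell G1 G G2 S \<tau> D2 P \<sigma>)
  show ?case
    unfolding image_Un swapS.simps
    by (rule tyS.ts_cell[OF tyM_swap[OF ts_cell.hyps(1), unfolded image_Un] _ ts_cell.IH])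
      (use ts_cell.hyps ok_e_swap[of G1 G2 "{}" D2] in \<open>simp_all add: swapN_disj ok_t_swap\<close>)
qed

text \<open>Renaming a bound name to a fresh one does not change the typings of a restriction:
  the swap moves only names that occur in no typing of it.\<close>

lemma tyS_rename_binder:
  assumes fresh: "z \<notin> fnS (Nu x P)" and ty: "tyS A B (Nu x P) \<tau>"
  shows "tyS A B (Nu z (swapS x z P)) \<tau>"
proof -
  have inv: "wellformed A B \<tau>" "A \<union> B \<subseteq> fnS (Nu x P)" using tyS_wf[OF ty] by auto
  have "x \<notin> fnS (Nu x P)" by simp
  then have outside: "x \<notin> A" "z \<notin> A" "x \<notin> B" "z \<notin> B" using inv(2) fresh by blast+
  have "\<And>c. c \<in> \<tau> \<Longrightarrow> actname c \<noteq> x \<and> actname c \<noteq> z"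
    using wf_actname[OF inv(1)] outside by blast
  then have "swapA x z ` \<tau> = \<tau>" by (rule swapA_fixes)
  moreover have "swapN x z ` A = A" "swapN x z ` B = B"
    using outside by (simp_all add: swapN_fixes)
  ultimately show ?thesis using tyS_swap[OF ty, of x z] by simp
qed

subsection \<open>Typing relations and their composition operators\<close>

type_synonym tyrel = "name set \<Rightarrow> name set \<Rightarrow> act set \<Rightarrow> bool"

definition typingsS :: "('pp, 'ap) sys \<Rightarrow> tyrel" where
  "typingsS P = (\<lambda>A B \<tau>. tyS A B P \<tau>)"

definition typingsM :: "'ap mem \<Rightarrow> tyrel" where
  "typingsM S = (\<lambda>A B \<tau>. tyM A B S \<tau>)"

text \<open>The operators mirroring the typing rules.  The join generalises parallel
  composition (R = True) and cells (the inner linear names are shared with the membrane).\<close>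

definition emptyT :: tyrel where
  "emptyT A B \<tau> \<longleftrightarrow> A = {} \<and> B = {} \<and> \<tau> = {}"

definition joinT :: "(name set \<Rightarrow> name set \<Rightarrow> bool) \<Rightarrow> tyrel \<Rightarrow> tyrel \<Rightarrow> tyrel" where
  "joinT R T1 T2 X Y \<rho> \<longleftrightarrow> (\<exists>A1 B1 \<tau> A2 B2 \<sigma>. T1 A1 B1 \<tau> \<and> T2 A2 B2 \<sigma> \<and> R A1 A2 \<and>
     compatible A1 B1 \<tau> A2 B2 \<sigma> \<and>
     X = symdiff A1 A2 \<and> Y = B1 \<union> B2 \<union> (A1 \<inter> A2) \<and> \<rho> = \<tau> \<union> \<sigma>)"

abbreviation parT :: "tyrel \<Rightarrow> tyrel \<Rightarrow> tyrel" where
  "parT \<equiv> joinT (\<lambda>_ _. True)"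

abbreviation cellT :: "tyrel \<Rightarrow> tyrel \<Rightarrow> tyrel" where
  "cellT \<equiv> joinT (\<lambda>A1 A2. A2 \<subseteq> A1)"

definition hideT :: "name \<Rightarrow> tyrel \<Rightarrow> tyrel" where
  "hideT x T A B \<tau> \<longleftrightarrow> (\<exists>B'. B = B' - {x} \<and> T A B' \<tau> \<and> x \<notin> A \<and> restr \<tau> {x} = {})"

definition bindT :: "name \<Rightarrow> act \<Rightarrow> tyrel \<Rightarrow> tyrel" where
  "bindT x p T A B \<tau> \<longleftrightarrow> T A (insert x B) (\<tau> \<union> {p, dual p}) \<and> x \<notin> B \<and> {p, dual p} \<inter> \<tau> = {}"

definition nuT :: "name \<Rightarrow> tyrel \<Rightarrow> tyrel" where
  "nuT x T = hideT x T \<squnion> bindT x (Ap x) T \<squnion> bindT x (Af x) T"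

definition prefixT :: "(name \<Rightarrow> act) \<Rightarrow> name \<Rightarrow> bool \<Rightarrow> tyrel \<Rightarrow> tyrel" where
  "prefixT c x e T A B \<tau> \<longleftrightarrow> (\<exists>A'. A = insert x A' \<and> \<tau> = {c x} \<and> T A' B {} \<and> e \<and> x \<notin> A' \<and> x \<notin> B)"

lemma nuT_apply:
  "nuT x T A B \<tau> \<longleftrightarrow> hideT x T A B \<tau> \<or> bindT x (Ap x) T A B \<tau> \<or> bindT x (Af x) T A B \<tau>"
  by (simp add: nuT_def)

lemma joinT_of_rule:
  assumes "T1 (G1 \<union> G) G2 \<tau>" "T2 (D1 \<union> G) D2 \<sigma>" "R (G1 \<union> G) (D1 \<union> G)"
    and conds: "G1 \<inter> G = {}" "D1 \<inter> G = {}" "ok_e G1 G2 D1 D2" "ok_t G \<tau> \<sigma>"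
      "G1 \<inter> D1 = {}" "G2 \<inter> D2 = {}" "G2 \<inter> G = {}" "D2 \<inter> G = {}"
  shows "joinT R T1 T2 (G1 \<union> D1) (G2 \<union> D2 \<union> G) (\<tau> \<union> \<sigma>)"
  unfolding joinT_def compatible_of_rule(2,3)[OF conds]
  using assms(1-3) compatible_of_rule(1)[OF conds] by blast

lemma joinT_I:
  "T1 A1 B1 \<tau> \<Longrightarrow> T2 A2 B2 \<sigma> \<Longrightarrow> R A1 A2 \<Longrightarrow> compatible A1 B1 \<tau> A2 B2 \<sigma> \<Longrightarrow>
   X = symdiff A1 A2 \<Longrightarrow> Y = B1 \<union> B2 \<union> (A1 \<inter> A2) \<Longrightarrow> \<rho> = \<tau> \<union> \<sigma> \<Longrightarrow> joinT R T1 T2 X Y \<rho>"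
  unfolding joinT_def by blast

lemma joinT_E:
  assumes "joinT R T1 T2 X Y \<rho>"
  obtains A1 B1 \<tau> A2 B2 \<sigma> where "T1 A1 B1 \<tau>" "T2 A2 B2 \<sigma>" "R A1 A2"
    "compatible A1 B1 \<tau> A2 B2 \<sigma>" "X = symdiff A1 A2" "Y = B1 \<union> B2 \<union> (A1 \<inter> A2)" "\<rho> = \<tau> \<union> \<sigma>"
  using assms unfolding joinT_def by blast

inductive_cases tyS_SNilE: "tyS A B SNil \<tau>"
inductive_cases tyS_SParE: "tyS A B (SPar P Q) \<tau>"
inductive_cases tyS_CellE: "tyS A B (Cell S P) \<tau>"
inductive_cases tyS_NuE: "tyS A B (Nu x P) \<tau>"
inductive_cases tyS_PinchE: "tyS A B (Pinch x P) \<tau>"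
inductive_cases tyS_FuseE: "tyS A B (Fuse x S P) \<tau>"
inductive_cases tyM_MNilE: "tyM A B MNil \<tau>"
inductive_cases tyM_MParE: "tyM A B (MPar S T) \<tau>"
inductive_cases tyM_CoPinchE: "tyM A B (CoPinch x S) \<tau>"

lemma typingsS_SNil: "typingsS SNil = emptyT"
  by (auto simp: fun_eq_iff typingsS_def emptyT_def intro: tyS.ts_empty elim: tyS_SNilE)

lemma typingsM_MNil: "typingsM MNil = emptyT"
  by (auto simp: fun_eq_iff typingsM_def emptyT_def intro: tyM.tm_empty elim: tyM_MNilE)

lemma typingsS_SPar: "typingsS (SPar P Q) = parT (typingsS P) (typingsS Q)"
proof (intro ext iffI)
  fix X Y \<rho> assume "typingsS (SPar P Q) X Y \<rho>"
  then show "parT (typingsS P) (typingsS Q) X Y \<rho>"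
    unfolding typingsS_def by (elim tyS_SParE) (blast intro: joinT_of_rule)
next
  fix X Y \<rho> assume "parT (typingsS P) (typingsS Q) X Y \<rho>"
  then obtain A1 B1 \<tau> A2 B2 \<sigma> where ty: "tyS A1 B1 P \<tau>" "tyS A2 B2 Q \<sigma>"
    and c: "compatible A1 B1 \<tau> A2 B2 \<sigma>"
    and eqs: "X = symdiff A1 A2" "Y = B1 \<union> B2 \<union> (A1 \<inter> A2)" "\<rho> = \<tau> \<union> \<sigma>"
    unfolding typingsS_def by (elim joinT_E)
  have "A1 = (A1 - A2) \<union> (A1 \<inter> A2)" "A2 = (A2 - A1) \<union> (A1 \<inter> A2)" by blast+
  then have "tyS ((A1 - A2) \<union> (A2 - A1)) (B1 \<union> B2 \<union> (A1 \<inter> A2)) (SPar P Q) (\<tau> \<union> \<sigma>)"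
    using ty rule_of_compatible[OF c] by (intro tyS.ts_par) auto
  then show "typingsS (SPar P Q) X Y \<rho>" unfolding typingsS_def eqs .
qed

lemma typingsM_MPar: "typingsM (MPar S T) = parT (typingsM S) (typingsM T)"
proof (intro ext iffI)
  fix X Y \<rho> assume "typingsM (MPar S T) X Y \<rho>"
  then show "parT (typingsM S) (typingsM T) X Y \<rho>"
    unfolding typingsM_def by (elim tyM_MParE) (blast intro: joinT_of_rule)
next
  fix X Y \<rho> assume "parT (typingsM S) (typingsM T) X Y \<rho>"
  then obtain A1 B1 \<tau> A2 B2 \<sigma> where ty: "tyM A1 B1 S \<tau>" "tyM A2 B2 T \<sigma>"
    and c: "compatible A1 B1 \<tau> A2 B2 \<sigma>"
    and eqs: "X = symdiff A1 A2" "Y = B1 \<union> B2 \<union> (A1 \<inter> A2)" "\<rho> = \<tau> \<union> \<sigma>"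
    unfolding typingsM_def by (elim joinT_E)
  have "(A1 - A2) \<union> (A1 \<inter> A2) = A1" "(A2 - A1) \<union> (A1 \<inter> A2) = A2" by blast+
  then have "tyM ((A1 - A2) \<union> (A1 \<inter> A2)) B1 S \<tau>" "tyM ((A2 - A1) \<union> (A1 \<inter> A2)) B2 T \<sigma>"
    using ty by simp_all
  then have "tyM ((A1 - A2) \<union> (A2 - A1)) (B1 \<union> B2 \<union> (A1 \<inter> A2)) (MPar S T) (\<tau> \<union> \<sigma>)"
    using rule_of_compatible[OF c] by (intro tyM.tm_par) auto
  then show "typingsM (MPar S T) X Y \<rho>" unfolding typingsM_def eqs .
qed

lemma typingsS_Cell: "typingsS (Cell S P) = cellT (typingsM S) (typingsS P)"
proof (intro ext iffI)
  fix X Y \<rho> assume "typingsS (Cell S P) X Y \<rho>"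
  then obtain G G2 D2 \<tau> \<sigma> where eqs: "Y = G2 \<union> D2 \<union> G" "\<rho> = \<tau> \<union> \<sigma>"
    and prems: "tyM (X \<union> G) G2 S \<tau>" "X \<inter> G = {}" "tyS G D2 P \<sigma>" "ok_e X G2 {} D2" "ok_t G \<tau> \<sigma>"
      "G2 \<inter> D2 = {}" "G2 \<inter> G = {}" "D2 \<inter> G = {}"
    unfolding typingsS_def by (elim tyS_CellE) blast
  have "cellT (typingsM S) (typingsS P) (X \<union> {}) (G2 \<union> D2 \<union> G) (\<tau> \<union> \<sigma>)"
    using prems by (intro joinT_of_rule) (simp_all add: typingsM_def typingsS_def)
  then show "cellT (typingsM S) (typingsS P) X Y \<rho>" using eqs by simp
next
  fix X Y \<rho> assume "cellT (typingsM S) (typingsS P) X Y \<rho>"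
  then obtain A1 B1 \<tau> A2 B2 \<sigma> where ty: "tyM A1 B1 S \<tau>" "tyS A2 B2 P \<sigma>" and sub: "A2 \<subseteq> A1"
    and c: "compatible A1 B1 \<tau> A2 B2 \<sigma>"
    and eqs: "X = symdiff A1 A2" "Y = B1 \<union> B2 \<union> (A1 \<inter> A2)" "\<rho> = \<tau> \<union> \<sigma>"
    unfolding typingsM_def typingsS_def by (elim joinT_E)
  have sets: "(A1 - A2) \<union> A2 = A1" "symdiff A1 A2 = A1 - A2" "A1 \<inter> A2 = A2" "A2 - A1 = {}"
    using sub by blast+
  have "ok_e (A1 - A2) B1 {} B2" using rule_of_compatible(1)[OF c] sets(4) by simp
  moreover have "tyM ((A1 - A2) \<union> A2) B1 S \<tau>" using ty(1) sets(1) by simp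
  ultimately have "tyS (A1 - A2) (B1 \<union> B2 \<union> A2) (Cell S P) (\<tau> \<union> \<sigma>)"
    using ty(2) rule_of_compatible(2-5)[OF c] unfolding sets(3) by (intro tyS.ts_cell) auto
  then show "typingsS (Cell S P) X Y \<rho>" unfolding typingsS_def eqs sets(2,3) .
qed

lemma typingsS_Nu: "typingsS (Nu x P) = nuT x (typingsS P)"
proof (intro ext iffI)
  fix A B \<tau> assume "typingsS (Nu x P) A B \<tau>"
  then show "nuT x (typingsS P) A B \<tau>"
    unfolding typingsS_def nuT_apply hideT_def bindT_def by (elim tyS_NuE) auto
next
  fix A B \<tau> assume "nuT x (typingsS P) A B \<tau>"
  then show "typingsS (Nu x P) A B \<tau>"
    unfolding typingsS_def nuT_apply hideT_def bindT_def
    by (auto intro: tyS.ts_nuprot tyS.ts_nupinch tyS.ts_nufuse)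
qed

lemma typingsS_Pinch: "typingsS (Pinch x P) = prefixT Ap x (actS P = {}) (typingsS P)"
  by (auto simp: fun_eq_iff typingsS_def prefixT_def intro: tyS.ts_pinch elim: tyS_PinchE)

lemma typingsS_Fuse: "typingsS (Fuse x S P) = prefixT Af x (actS (Cell S P) = {}) (typingsS (Cell S P))"
  by (auto simp: fun_eq_iff typingsS_def prefixT_def intro: tyS.ts_fuse elim: tyS_FuseE)

lemma typingsM_CoPinch: "typingsM (CoPinch x S) = prefixT Apc x (actM S = {}) (typingsM S)"
  by (auto simp: fun_eq_iff typingsM_def prefixT_def intro: tyM.tm_copinch elim: tyM_CoPinchE)

subsection \<open>Algebraic laws of the operators\<close>

lemma parT_comm_imp: "parT T1 T2 X Y \<rho> \<Longrightarrow> parT T2 T1 X Y \<rho>"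
proof (elim joinT_E)
  fix A1 B1 \<tau> A2 B2 \<sigma>
  assume "T1 A1 B1 \<tau>" "T2 A2 B2 \<sigma>" "compatible A1 B1 \<tau> A2 B2 \<sigma>"
    "X = symdiff A1 A2" "Y = B1 \<union> B2 \<union> (A1 \<inter> A2)" "\<rho> = \<tau> \<union> \<sigma>"
  then show "parT T2 T1 X Y \<rho>"
    by (intro joinT_I[of T2 A2 B2 \<sigma> T1 A1 B1 \<tau>]) (auto simp: compatible_sym)
qed

lemma parT_comm: "parT T1 T2 = parT T2 T1"
  by (intro ext iffI) (simp_all add: parT_comm_imp)

lemma parT_emptyT: "parT T emptyT = T"
proof (intro ext iffI)
  fix X Y \<rho> assume "parT T emptyT X Y \<rho>"
  then show "T X Y \<rho>" by (elim joinT_E) (simp add: emptyT_def)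
next
  fix X Y \<rho> assume "T X Y \<rho>"
  then show "parT T emptyT X Y \<rho>"
    by (intro joinT_I[of T X Y \<rho> emptyT "{}" "{}" "{}"]) (simp_all add: emptyT_def compatible_empty)
qed

text \<open>Associativity of composition for well-formed typings: no name is linear in all three
  components, and the compatibility conditions can be regrouped.\<close>

lemma compatible_assoc:
  assumes w1: "wellformed A1 B1 \<tau>1" and w2: "wellformed A2 B2 \<tau>2" and w3: "wellformed A3 B3 \<tau>3"
    and c12: "compatible A1 B1 \<tau>1 A2 B2 \<tau>2"
    and c123: "compatible (symdiff A1 A2) (B1 \<union> B2 \<union> (A1 \<inter> A2)) (\<tau>1 \<union> \<tau>2) A3 B3 \<tau>3"
  shows "compatible A2 B2 \<tau>2 A3 B3 \<tau>3"
    and "compatible A1 B1 \<tau>1 (symdiff A2 A3) (B2 \<union> B3 \<union> (A2 \<inter> A3)) (\<tau>2 \<union> \<tau>3)"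
    and "A1 \<inter> A2 \<inter> A3 = {}"
proof -
  have d12: "B1 \<inter> A2 = {}" "B1 \<inter> B2 = {}" "A1 \<inter> B2 = {}" and ok12: "ok_t (A1 \<inter> A2) \<tau>1 \<tau>2"
    using c12 by (simp_all add: compatible_def)
  have d123: "(B1 \<union> B2 \<union> (A1 \<inter> A2)) \<inter> A3 = {}" "(B1 \<union> B2 \<union> (A1 \<inter> A2)) \<inter> B3 = {}"
      "symdiff A1 A2 \<inter> B3 = {}"
    and ok123: "ok_t (symdiff A1 A2 \<inter> A3) (\<tau>1 \<union> \<tau>2) \<tau>3"
    using c123 by (simp_all add: compatible_def)
  show "A1 \<inter> A2 \<inter> A3 = {}" using d123(1) by blast
  have ok23: "ok_t (A2 \<inter> A3) \<tau>2 \<tau>3"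
    unfolding ok_t_iff_names
  proof
    fix x assume x: "x \<in> A2 \<inter> A3"
    then have "x \<notin> A1" using d123(1) by blast
    then have "x \<in> symdiff A1 A2 \<inter> A3" "x \<notin> A1 \<union> B1" using x d12(1) by blast+
    then show "restr \<tau>3 {x} = dualset (restr \<tau>2 {x})"
      using ok_t_name[OF ok123] wf_outside[OF w1] by (simp add: restr_Un)
  qed
  have ok1_23: "ok_t (A1 \<inter> symdiff A2 A3) \<tau>1 (\<tau>2 \<union> \<tau>3)"
    unfolding ok_t_iff_names
  proof
    fix x assume x: "x \<in> A1 \<inter> symdiff A2 A3"
    show "restr (\<tau>2 \<union> \<tau>3) {x} = dualset (restr \<tau>1 {x})"
    proof (cases "x \<in> A2")
      case True
      then have "x \<in> A1 \<inter> A2" "x \<notin> A3 \<union> B3" using x d123(2) by blast+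
      then show ?thesis using ok_t_name[OF ok12] wf_outside[OF w3] by (simp add: restr_Un)
    next
      case False
      then have "x \<in> symdiff A1 A2 \<inter> A3" "x \<notin> A2 \<union> B2" using x d12(3) by blast+
      then show ?thesis using ok_t_name[OF ok123] wf_outside[OF w2] by (simp add: restr_Un)
    qed
  qed
  show "compatible A2 B2 \<tau>2 A3 B3 \<tau>3"
    unfolding compatible_def using d123 ok23 by blast
  show "compatible A1 B1 \<tau>1 (symdiff A2 A3) (B2 \<union> B3 \<union> (A2 \<inter> A3)) (\<tau>2 \<union> \<tau>3)"
    unfolding compatible_def using d12 d123 ok1_23 by blast
qed

definition wf_rel :: "tyrel \<Rightarrow> bool" where
  "wf_rel T \<longleftrightarrow> (\<forall>A B \<tau>. T A B \<tau> \<longrightarrow> wellformed A B \<tau>)"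

lemma wf_rel_typingsS: "wf_rel (typingsS P)"
  unfolding wf_rel_def typingsS_def using tyS_wf by blast

lemma wf_rel_typingsM: "wf_rel (typingsM S)"
  unfolding wf_rel_def typingsM_def using tyM_wf by blast

lemma parT_assoc_imp:
  assumes wf: "wf_rel T1" "wf_rel T2" "wf_rel T3"
    and j: "parT (parT T1 T2) T3 X Y \<rho>"
  shows "parT T1 (parT T2 T3) X Y \<rho>"
proof -
  obtain A12 B12 \<tau>12 A3 B3 \<tau>3 where j12: "parT T1 T2 A12 B12 \<tau>12" and t3: "T3 A3 B3 \<tau>3"
    and c123: "compatible A12 B12 \<tau>12 A3 B3 \<tau>3"
    and eqs: "X = symdiff A12 A3" "Y = B12 \<union> B3 \<union> (A12 \<inter> A3)" "\<rho> = \<tau>12 \<union> \<tau>3"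
    using j unfolding joinT_def[of "\<lambda>_ _. True" "parT T1 T2" T3] by blast
  obtain A1 B1 \<tau>1 A2 B2 \<tau>2 where t1: "T1 A1 B1 \<tau>1" and t2: "T2 A2 B2 \<tau>2"
    and c12: "compatible A1 B1 \<tau>1 A2 B2 \<tau>2"
    and eqs12: "A12 = symdiff A1 A2" "B12 = B1 \<union> B2 \<union> (A1 \<inter> A2)" "\<tau>12 = \<tau>1 \<union> \<tau>2"
    using j12 by (elim joinT_E)
  have w: "wellformed A1 B1 \<tau>1" "wellformed A2 B2 \<tau>2" "wellformed A3 B3 \<tau>3"
    using wf t1 t2 t3 by (auto simp: wf_rel_def)
  note c = compatible_assoc[OF w c12 c123[unfolded eqs12]]
  have j23: "parT T2 T3 (symdiff A2 A3) (B2 \<union> B3 \<union> (A2 \<inter> A3)) (\<tau>2 \<union> \<tau>3)"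
    using t2 t3 c(1) by (intro joinT_I[of T2 A2 B2 \<tau>2 T3 A3 B3 \<tau>3]) simp_all
  show ?thesis
  proof (rule joinT_I[of T1 A1 B1 \<tau>1 "parT T2 T3"])
    show "T1 A1 B1 \<tau>1" "parT T2 T3 (symdiff A2 A3) (B2 \<union> B3 \<union> (A2 \<inter> A3)) (\<tau>2 \<union> \<tau>3)" "True"
      by (fact t1, fact j23, fact TrueI)
    show "compatible A1 B1 \<tau>1 (symdiff A2 A3) (B2 \<union> B3 \<union> (A2 \<inter> A3)) (\<tau>2 \<union> \<tau>3)"
      by (fact c(2))
    show "X = symdiff A1 (symdiff A2 A3)" unfolding eqs eqs12 by blast
    show "Y = B1 \<union> (B2 \<union> B3 \<union> (A2 \<inter> A3)) \<union> (A1 \<inter> symdiff A2 A3)"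
      unfolding eqs eqs12 using c(3) by blast
    show "\<rho> = \<tau>1 \<union> (\<tau>2 \<union> \<tau>3)" unfolding eqs eqs12 by blast
  qed
qed

lemma parT_assoc:
  assumes "wf_rel T1" "wf_rel T2" "wf_rel T3"
  shows "parT (parT T1 T2) T3 = parT T1 (parT T2 T3)"
proof (intro ext iffI)
  fix X Y \<rho> assume "parT (parT T1 T2) T3 X Y \<rho>"
  then show "parT T1 (parT T2 T3) X Y \<rho>" using parT_assoc_imp assms by blast
next
  fix X Y \<rho> assume "parT T1 (parT T2 T3) X Y \<rho>"
  then have "parT (parT T3 T2) T1 X Y \<rho>" by (simp add: parT_comm)
  then have "parT T3 (parT T2 T1) X Y \<rho>" using parT_assoc_imp assms by blast
  then show "parT (parT T1 T2) T3 X Y \<rho>" by (simp add: parT_comm)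
qed

definition fresh_in :: "name \<Rightarrow> tyrel \<Rightarrow> bool" where
  "fresh_in x T \<longleftrightarrow> (\<forall>A B \<tau>. T A B \<tau> \<longrightarrow> x \<notin> A \<and> x \<notin> B \<and> restr \<tau> {x} = {})"

lemma fresh_inD: "fresh_in x T \<Longrightarrow> T A B \<tau> \<Longrightarrow> x \<notin> A \<and> x \<notin> B \<and> restr \<tau> {x} = {}"
  unfolding fresh_in_def by blast

lemma fresh_in_wf_rel:
  assumes "wf_rel T" and "\<And>A B \<tau>. T A B \<tau> \<Longrightarrow> A \<union> B \<subseteq> N" and "x \<notin> N"
  shows "fresh_in x T"
  unfolding fresh_in_def
proof (intro allI impI conjI)
  fix A B \<tau> assume t: "T A B \<tau>"
  then show "x \<notin> A" "x \<notin> B" using assms(2,3) by blast+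
  have "actname a \<in> A \<union> B" if "a \<in> \<tau>" for a
    using wf_actname[OF _ that] assms(1) t unfolding wf_rel_def by blast
  moreover have "A \<union> B \<subseteq> N" using assms(2) t .
  ultimately show "restr \<tau> {x} = {}" using assms(3) unfolding restr_def by blast
qed

lemma fresh_in_typingsS: "x \<notin> fnS P \<Longrightarrow> fresh_in x (typingsS P)"
  by (rule fresh_in_wf_rel[OF wf_rel_typingsS]) (auto simp: typingsS_def dest: tyS_wf)

lemma fresh_in_typingsM: "x \<notin> fnM S \<Longrightarrow> fresh_in x (typingsM S)"
  by (rule fresh_in_wf_rel[OF wf_rel_typingsM]) (auto simp: typingsM_def dest: tyM_wf)

lemma compatible_update:
  assumes c: "compatible A1 B1 \<tau> A2 B2 \<sigma>" and "B2' \<subseteq> insert x B2" and "x \<notin> A1" "x \<notin> B1"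
    and "restr \<sigma>' (A1 \<inter> A2) = restr \<sigma> (A1 \<inter> A2)"
  shows "compatible A1 B1 \<tau> A2 B2' \<sigma>'"
proof (rule compatibleI)
  show "B1 \<inter> A2 = {}" using c by (simp add: compatible_def)
  show "B1 \<inter> B2' = {}" "A1 \<inter> B2' = {}" using c assms(2-4) unfolding compatible_def by blast+
  show "ok_t (A1 \<inter> A2) \<tau> \<sigma>'" using c assms(5) by (simp add: compatible_def ok_t_def)
qed

lemma hideT_joinT:
  assumes fresh: "fresh_in x T1"
  shows "hideT x (joinT R T1 T2) = joinT R T1 (hideT x T2)"
proof (intro ext iffI)
  fix X Y \<rho> assume "hideT x (joinT R T1 T2) X Y \<rho>"
  then obtain Y' A1 B1 \<tau> A2 B2 \<sigma> where Y: "Y = Y' - {x}" and x: "x \<notin> X" "restr \<rho> {x} = {}"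
    and t: "T1 A1 B1 \<tau>" "T2 A2 B2 \<sigma>" "R A1 A2" and c: "compatible A1 B1 \<tau> A2 B2 \<sigma>"
    and eqs: "X = symdiff A1 A2" "Y' = B1 \<union> B2 \<union> (A1 \<inter> A2)" "\<rho> = \<tau> \<union> \<sigma>"
    unfolding hideT_def joinT_def by blast
  have x1: "x \<notin> A1" "x \<notin> B1" using fresh_inD[OF fresh t(1)] by blast+
  have "hideT x T2 A2 (B2 - {x}) \<sigma>"
    unfolding hideT_def using t(2) x x1 eqs by (auto simp: restr_Un)
  moreover have "compatible A1 B1 \<tau> A2 (B2 - {x}) \<sigma>"
    using c by (auto simp: compatible_def)
  moreover have "Y = B1 \<union> (B2 - {x}) \<union> (A1 \<inter> A2)" using Y eqs(2) x1 by blast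
  ultimately show "joinT R T1 (hideT x T2) X Y \<rho>"
    using t(1,3) eqs(1,3) by (intro joinT_I[of T1 A1 B1 \<tau>]) simp_all
next
  fix X Y \<rho> assume "joinT R T1 (hideT x T2) X Y \<rho>"
  then obtain A1 B1 \<tau> A2 B2 B2' \<sigma> where t: "T1 A1 B1 \<tau>" "T2 A2 B2' \<sigma>" "R A1 A2"
    and h: "B2 = B2' - {x}" "x \<notin> A2" "restr \<sigma> {x} = {}"
    and c: "compatible A1 B1 \<tau> A2 B2 \<sigma>"
    and eqs: "X = symdiff A1 A2" "Y = B1 \<union> B2 \<union> (A1 \<inter> A2)" "\<rho> = \<tau> \<union> \<sigma>"
    unfolding hideT_def joinT_def by blast
  have x1: "x \<notin> A1" "x \<notin> B1" "restr \<tau> {x} = {}" using fresh_inD[OF fresh t(1)] by blast+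
  have "compatible A1 B1 \<tau> A2 B2' \<sigma>"
    using c h(1) x1 unfolding compatible_def by blast
  then have "joinT R T1 T2 X (B1 \<union> B2' \<union> (A1 \<inter> A2)) \<rho>"
    using t eqs(1,3) by (intro joinT_I[of T1 A1 B1 \<tau>]) simp_all
  moreover have "Y = (B1 \<union> B2' \<union> (A1 \<inter> A2)) - {x}" using eqs(2) h(1) x1 by blast
  moreover have "x \<notin> X" using eqs(1) x1 h(2) by blast
  moreover have "restr \<rho> {x} = {}" using eqs(3) x1 h(3) by (simp add: restr_Un)
  ultimately show "hideT x (joinT R T1 T2) X Y \<rho>" unfolding hideT_def by blast
qed

lemma bindT_joinT_push:
  assumes fresh: "fresh_in x T1" and p: "actname p = x"
    and "bindT x p (joinT R T1 T2) X Y \<rho>"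
  shows "joinT R T1 (bindT x p T2) X Y \<rho>"
proof -
  have j: "joinT R T1 T2 X (insert x Y) (\<rho> \<union> {p, dual p})"
    and xY: "x \<notin> Y" and new: "{p, dual p} \<inter> \<rho> = {}"
    using assms(3) unfolding bindT_def by blast+
  from j obtain A1 B1 \<tau> A2 B2 \<sigma>
    where t: "T1 A1 B1 \<tau>" "T2 A2 B2 \<sigma>" "R A1 A2" and c: "compatible A1 B1 \<tau> A2 B2 \<sigma>"
    and eqs: "X = symdiff A1 A2" "insert x Y = B1 \<union> B2 \<union> (A1 \<inter> A2)" "\<rho> \<union> {p, dual p} = \<tau> \<union> \<sigma>"
    by (elim joinT_E)
  have x1: "x \<notin> A1" "x \<notin> B1" "restr \<tau> {x} = {}" using fresh_inD[OF fresh t(1)] by blast+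
  then have "{p, dual p} \<inter> \<tau> = {}" using p by (auto simp: restr_def)
  then have pair: "{p, dual p} \<subseteq> \<sigma>" and rho: "\<rho> = \<tau> \<union> (\<sigma> - {p, dual p})"
    using eqs(3) new by blast+
  have r: "restr (\<sigma> - {p, dual p}) (A1 \<inter> A2) = restr \<sigma> (A1 \<inter> A2)"
    using x1(1) by (intro restr_pair_other(2)[OF p]) blast
  have "x \<in> B2" using eqs(2) x1 by blast
  then have "insert x (B2 - {x}) = B2" "(\<sigma> - {p, dual p}) \<union> {p, dual p} = \<sigma>"
    using pair by blast+
  then have "T2 A2 (insert x (B2 - {x})) ((\<sigma> - {p, dual p}) \<union> {p, dual p})"
    using t(2) by simp
  then have "bindT x p T2 A2 (B2 - {x}) (\<sigma> - {p, dual p})" unfolding bindT_def by blast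
  moreover have "compatible A1 B1 \<tau> A2 (B2 - {x}) (\<sigma> - {p, dual p})"
    using r x1(1,2) by (intro compatible_update[OF c]) auto
  moreover have "Y = B1 \<union> (B2 - {x}) \<union> (A1 \<inter> A2)"
  proof -
    have "Y = insert x Y - {x}" using xY by simp
    also have "\<dots> = B1 \<union> (B2 - {x}) \<union> (A1 \<inter> A2)" unfolding eqs(2) using x1 by blast
    finally show ?thesis .
  qed
  ultimately show ?thesis
    using t(1,3) eqs(1) rho by (intro joinT_I[of T1 A1 B1 \<tau>]) simp_all
qed

lemma bindT_joinT_pull:
  assumes fresh: "fresh_in x T1" and p: "actname p = x"
    and "joinT R T1 (bindT x p T2) X Y \<rho>"
  shows "bindT x p (joinT R T1 T2) X Y \<rho>"
proof -
  obtain A1 B1 \<tau> A2 B2 \<sigma> where t: "T1 A1 B1 \<tau>" "bindT x p T2 A2 B2 \<sigma>" "R A1 A2"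
    and c: "compatible A1 B1 \<tau> A2 B2 \<sigma>"
    and eqs: "X = symdiff A1 A2" "Y = B1 \<union> B2 \<union> (A1 \<inter> A2)" "\<rho> = \<tau> \<union> \<sigma>"
    using assms(3) by (elim joinT_E)
  have t2: "T2 A2 (insert x B2) (\<sigma> \<union> {p, dual p})" and b: "x \<notin> B2" "{p, dual p} \<inter> \<sigma> = {}"
    using t(2) unfolding bindT_def by blast+
  have x1: "x \<notin> A1" "x \<notin> B1" "restr \<tau> {x} = {}" using fresh_inD[OF fresh t(1)] by blast+
  then have "{p, dual p} \<inter> \<tau> = {}" using p by (auto simp: restr_def)
  have "restr (\<sigma> \<union> {p, dual p}) (A1 \<inter> A2) = restr \<sigma> (A1 \<inter> A2)"
    using x1(1) by (intro restr_pair_other(1)[OF p]) blast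
  then have "compatible A1 B1 \<tau> A2 (insert x B2) (\<sigma> \<union> {p, dual p})"
    using x1(1,2) by (intro compatible_update[OF c]) auto
  then have "joinT R T1 T2 X (insert x Y) (\<rho> \<union> {p, dual p})"
    using t(1,3) t2 eqs by (intro joinT_I[of T1 A1 B1 \<tau>]) auto
  moreover have "x \<notin> Y" using eqs(2) x1 b(1) by blast
  moreover have "{p, dual p} \<inter> \<rho> = {}"
    using eqs(3) b(2) \<open>{p, dual p} \<inter> \<tau> = {}\<close> by blast
  ultimately show ?thesis unfolding bindT_def by blast
qed

lemma bindT_joinT:
  assumes "fresh_in x T1" and "actname p = x"
  shows "bindT x p (joinT R T1 T2) = joinT R T1 (bindT x p T2)"
  using bindT_joinT_push[OF assms] bindT_joinT_pull[OF assms] by (intro ext iffI)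

lemma joinT_sup: "joinT R T1 (T2 \<squnion> T3) = joinT R T1 T2 \<squnion> joinT R T1 T3"
proof (intro ext)
  fix X Y \<rho>
  show "joinT R T1 (T2 \<squnion> T3) X Y \<rho> = (joinT R T1 T2 \<squnion> joinT R T1 T3) X Y \<rho>"
    unfolding joinT_def sup_fun_def sup_bool_def by blast
qed

lemma nuT_joinT: "fresh_in x T1 \<Longrightarrow> nuT x (joinT R T1 T2) = joinT R T1 (nuT x T2)"
  by (simp add: nuT_def hideT_joinT bindT_joinT joinT_sup)

lemma hideT_sup: "hideT x (T \<squnion> T') = hideT x T \<squnion> hideT x T'"
  by (intro ext) (auto simp: hideT_def)

lemma bindT_sup: "bindT x p (T \<squnion> T') = bindT x p T \<squnion> bindT x p T'"
  by (intro ext) (auto simp: bindT_def)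

lemma hideT_hideT_imp:
  assumes "hideT n (hideT m T) A B \<tau>"
  shows "hideT m (hideT n T) A B \<tau>"
proof -
  obtain B1 where h1: "B = B1 - {n}" "hideT m T A B1 \<tau>" "n \<notin> A" "restr \<tau> {n} = {}"
    using assms unfolding hideT_def[of n] by blast
  obtain B2 where h: "B1 = B2 - {m}" "T A B2 \<tau>" "m \<notin> A" "restr \<tau> {m} = {}"
    using h1(2) unfolding hideT_def by blast
  have "B = B2 - {n} - {m}" unfolding h1(1) h(1) by blast
  moreover have "hideT n T A (B2 - {n}) \<tau>" unfolding hideT_def using h(2) h1(3,4) by blast
  ultimately show ?thesis unfolding hideT_def[of m] using h(3,4) by blast
qed

lemma hideT_hideT: "hideT n (hideT m T) = hideT m (hideT n T)"
  by (intro ext iffI) (erule hideT_hideT_imp)+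

lemma hideT_bindT:
  assumes nm: "n \<noteq> m" and q: "actname q = m"
  shows "hideT n (bindT m q T) = bindT m q (hideT n T)"
proof (intro ext iffI)
  fix A B \<tau> assume "hideT n (bindT m q T) A B \<tau>"
  then obtain B1 where h1: "B = B1 - {n}" "bindT m q T A B1 \<tau>" "n \<notin> A" "restr \<tau> {n} = {}"
    unfolding hideT_def by blast
  then have h: "B = B1 - {n}" "T A (insert m B1) (\<tau> \<union> {q, dual q})" "m \<notin> B1"
    "{q, dual q} \<inter> \<tau> = {}" "n \<notin> A" "restr \<tau> {n} = {}"
    unfolding bindT_def by blast+
  have "insert m B = insert m B1 - {n}" using h(1) nm by blast
  moreover have "restr (\<tau> \<union> {q, dual q}) {n} = {}"
    using h(6) q nm by (auto simp: restr_def)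
  ultimately have "hideT n T A (insert m B) (\<tau> \<union> {q, dual q})"
    unfolding hideT_def using h(2,5) by blast
  then show "bindT m q (hideT n T) A B \<tau>"
    unfolding bindT_def using h(1,3,4) by blast
next
  fix A B \<tau> assume "bindT m q (hideT n T) A B \<tau>"
  then have b: "hideT n T A (insert m B) (\<tau> \<union> {q, dual q})" "m \<notin> B" "{q, dual q} \<inter> \<tau> = {}"
    unfolding bindT_def by blast+
  then obtain B2 where "insert m B = B2 - {n}" "T A B2 (\<tau> \<union> {q, dual q})" "n \<notin> A"
    "restr (\<tau> \<union> {q, dual q}) {n} = {}"
    unfolding hideT_def by blast
  note h = this b(2,3)
  have "m \<in> B2" using h(1) by blast
  then have "insert m (B2 - {m}) = B2" by blast
  then have "bindT m q T A (B2 - {m}) \<tau>"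
    unfolding bindT_def using h(2,6) by simp
  moreover have "B = B2 - {m} - {n}"
  proof -
    have "B = insert m B - {m}" using h(5) by simp
    also have "\<dots> = B2 - {m} - {n}" unfolding h(1) by blast
    finally show ?thesis .
  qed
  moreover have "restr \<tau> {n} = {}" using h(4) unfolding restr_def by blast
  ultimately show "hideT n (bindT m q T) A B \<tau>"
    unfolding hideT_def using h(3) by blast
qed

lemma bindT_bindT_imp:
  assumes b: "bindT n p (bindT m q T) A B \<tau>"
    and nm: "n \<noteq> m" and p: "actname p = n" and q: "actname q = m"
  shows "bindT m q (bindT n p T) A B \<tau>"
proof -
  have h: "T A (insert m (insert n B)) (\<tau> \<union> {p, dual p} \<union> {q, dual q})"
    "m \<notin> insert n B" "{q, dual q} \<inter> (\<tau> \<union> {p, dual p}) = {}" "n \<notin> B" "{p, dual p} \<inter> \<tau> = {}"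
    using b unfolding bindT_def by blast+
  have "{p, dual p} \<inter> {q, dual q} = {}" using nm p q by (simp add: pairs_disjoint)
  moreover have "insert n (insert m B) = insert m (insert n B)"
    "\<tau> \<union> {q, dual q} \<union> {p, dual p} = \<tau> \<union> {p, dual p} \<union> {q, dual q}" by blast+
  ultimately show ?thesis unfolding bindT_def using h by auto
qed

lemma bindT_bindT:
  assumes "n \<noteq> m" and "actname p = n" and "actname q = m"
  shows "bindT n p (bindT m q T) = bindT m q (bindT n p T)"
  using assms by (intro ext iffI) (erule bindT_bindT_imp; simp)+

lemma nuT_nuT:
  assumes "n \<noteq> m"
  shows "nuT n (nuT m T) = nuT m (nuT n T)"
proof -
  have "m \<noteq> n" using assms by simp
  then show ?thesis
    using assms by (simp add: nuT_def hideT_sup bindT_sup hideT_bindT bindT_bindT hideT_hideT sup_aci)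
qed

lemma nuT_emptyT: "nuT x emptyT = emptyT"
  by (intro ext) (auto simp: nuT_apply hideT_def bindT_def emptyT_def restr_def)

lemma prefixT_sup: "prefixT c m e (T \<squnion> T') = prefixT c m e T \<squnion> prefixT c m e T'"
  by (intro ext) (auto simp: prefixT_def)

lemma hideT_prefixT:
  assumes nm: "n \<noteq> m" and c: "actname (c m) = m"
  shows "hideT n (prefixT c m e T) = prefixT c m e (hideT n T)"
proof (intro ext iffI)
  fix A B \<tau> assume "hideT n (prefixT c m e T) A B \<tau>"
  then obtain B' A' where h: "B = B' - {n}" "n \<notin> A" "A = insert m A'" "\<tau> = {c m}"
    "T A' B' {}" e "m \<notin> A'" "m \<notin> B'"
    unfolding hideT_def prefixT_def by blast
  have "hideT n T A' B {}" unfolding hideT_def using h(1-3,5) by (auto simp: restr_def)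
  then show "prefixT c m e (hideT n T) A B \<tau>" unfolding prefixT_def using h by blast
next
  fix A B \<tau> assume "prefixT c m e (hideT n T) A B \<tau>"
  then obtain A' B' where h: "A = insert m A'" "\<tau> = {c m}" e "m \<notin> A'" "m \<notin> B"
    "B = B' - {n}" "T A' B' {}" "n \<notin> A'"
    unfolding hideT_def prefixT_def by blast
  have "m \<notin> B'" using h(5,6) nm by blast
  then have "prefixT c m e T A B' \<tau>" unfolding prefixT_def using h by blast
  moreover have "n \<notin> A" "restr \<tau> {n} = {}" using h(1,2,8) nm c by (auto simp: restr_def)
  ultimately show "hideT n (prefixT c m e T) A B \<tau>" unfolding hideT_def using h(6) by blast
qed

text \<open>A prefixed system offers only its own action, so no pair of dual actions on another
  name can be bound in it; dually, if the continuation offers no actions, it cannot bind a pair.\<close>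

lemma bindT_prefixT:
  assumes "actname p \<noteq> m" and "actname (c m) = m"
  shows "bindT x p (prefixT c m e T) = \<bottom>"
proof (intro ext)
  fix A B \<tau>
  have "p \<noteq> c m" using assms by auto
  then have "\<tau> \<union> {p, dual p} \<noteq> {c m}" by blast
  then have "\<not> bindT x p (prefixT c m e T) A B \<tau>"
    unfolding bindT_def prefixT_def by blast
  then show "bindT x p (prefixT c m e T) A B \<tau> = \<bottom> A B \<tau>" by simp
qed

lemma prefixT_bindT:
  assumes "\<And>A B \<tau>. e \<Longrightarrow> T A B \<tau> \<Longrightarrow> \<tau> = {}"
  shows "prefixT c m e (bindT x p T) = \<bottom>"
  using assms by (intro ext) (auto simp: prefixT_def bindT_def)

lemma nuT_prefixT:
  assumes "n \<noteq> m" and "actname (c m) = m" and "\<And>A B \<tau>. e \<Longrightarrow> T A B \<tau> \<Longrightarrow> \<tau> = {}"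
  shows "nuT n (prefixT c m e T) = prefixT c m e (nuT n T)"
  using assms by (simp add: nuT_def hideT_prefixT bindT_prefixT prefixT_bindT prefixT_sup)

subsection \<open>Structural equivalence preserves typing\<close>

lemma typingsS_rename_binder:
  assumes fresh: "z \<notin> fnS (Nu x P)"
  shows "typingsS (Nu x P) = typingsS (Nu z (swapS x z P))"
proof (intro ext iffI)
  fix A B \<tau> assume "typingsS (Nu x P) A B \<tau>"
  then show "typingsS (Nu z (swapS x z P)) A B \<tau>"
    unfolding typingsS_def using tyS_rename_binder[OF fresh] by blast
next
  fix A B \<tau> assume ty: "typingsS (Nu z (swapS x z P)) A B \<tau>"
  have "x \<notin> fnS (Nu z (swapS x z P))"
    using fresh by (auto simp: fnS_swap swapN_def)
  then have "tyS A B (Nu x (swapS z x (swapS x z P))) \<tau>"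
    using tyS_rename_binder ty unfolding typingsS_def by blast
  then show "typingsS (Nu x P) A B \<tau>"
    unfolding typingsS_def by (simp add: swapS_commute[of z x])
qed

lemma alphaS_typings: "alphaS P Q \<Longrightarrow> typingsS P = typingsS Q \<and> (actS P = {} \<longleftrightarrow> actS Q = {})"
proof (induction rule: alphaS.induct)
  case (a_cell P Q S)
  then show ?case by (simp add: typingsS_Cell)
next
  case (a_par P P' Q Q')
  then show ?case by (simp add: typingsS_SPar)
next
  case (a_nu z x P y Q)
  have "typingsS (Nu x P) = typingsS (Nu z (swapS x z P))"
    by (rule typingsS_rename_binder[OF a_nu.hyps(1)])
  also have "\<dots> = typingsS (Nu z (swapS y z Q))"
    using a_nu.IH by (simp add: typingsS_Nu)
  also have "\<dots> = typingsS (Nu y Q)"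
    by (rule typingsS_rename_binder[OF a_nu.hyps(2), symmetric])
  finally show ?case using a_nu.IH by (simp add: actS_swap)
next
  case (a_pinch P Q n)
  then show ?case by (simp add: typingsS_Pinch)
next
  case (a_fuse P Q n S)
  then show ?case by (simp add: typingsS_Fuse typingsS_Cell)
qed simp_all

lemma eqM_typings: "eqM S T \<Longrightarrow> typingsM S = typingsM T \<and> actM S = actM T"
proof (induction rule: eqM.induct)
  case (m_comm S T)
  then show ?case by (simp add: typingsM_MPar parT_comm Un_commute)
next
  case (m_assoc S T U)
  then show ?case by (simp add: typingsM_MPar parT_assoc wf_rel_typingsM Un_assoc)
next
  case (m_unit S)
  then show ?case by (simp add: typingsM_MPar typingsM_MNil parT_emptyT)
next
  case (m_par S S' T T')
  then show ?case by (simp add: typingsM_MPar)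
next
  case (m_copinch S T n)
  then show ?case by (simp add: typingsM_CoPinch)
qed simp_all

lemma typingsS_no_actions: "actS P = {} \<Longrightarrow> typingsS P A B \<tau> \<Longrightarrow> \<tau> = {}"
  unfolding typingsS_def using tyS_wf by blast

lemma nuT_parT: "fresh_in n T2 \<Longrightarrow> nuT n (parT T1 T2) = parT (nuT n T1) T2"
  by (simp add: parT_comm[of T1] parT_comm[of "nuT n T1"] nuT_joinT)

text \<open>The typing relation, and whether the system has actions, are invariants of structural
  equivalence; the second part is needed for the prefix rules.\<close>

lemma eqS_typings: "eqS P Q \<Longrightarrow> typingsS P = typingsS Q \<and> (actS P = {} \<longleftrightarrow> actS Q = {})"
proof (induction rule: eqS.induct)
  case (s_alpha P Q)
  then show ?case by (rule alphaS_typings)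
next
  case (s_comm P Q)
  then show ?case by (auto simp: typingsS_SPar parT_comm)
next
  case (s_assoc P Q R)
  then show ?case by (auto simp: typingsS_SPar parT_assoc wf_rel_typingsS)
next
  case (s_unit P)
  then show ?case by (simp add: typingsS_SPar typingsS_SNil parT_emptyT)
next
  case (s_nunu n m P)
  then show ?case by (simp add: typingsS_Nu nuT_nuT)
next
  case (s_nunil n)
  then show ?case by (simp add: typingsS_Nu typingsS_SNil nuT_emptyT)
next
  case (s_nupar n Q P)
  then show ?case by (auto simp: typingsS_Nu typingsS_SPar nuT_parT fresh_in_typingsS)
next
  case (s_nucell n S P)
  then show ?case by (auto simp: typingsS_Nu typingsS_Cell nuT_joinT fresh_in_typingsM)
next
  case (s_nupinch n m P)
  then show ?case
    by (simp add: typingsS_Nu typingsS_Pinch nuT_prefixT typingsS_no_actions)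
next
  case (s_nufuse n m S P)
  let ?e = "actS (Cell S P) = {}"
  have "typingsS (Nu n (Fuse m S P)) = nuT n (prefixT Af m ?e (typingsS (Cell S P)))"
    by (simp only: typingsS_Nu typingsS_Fuse)
  also have "\<dots> = prefixT Af m ?e (nuT n (typingsS (Cell S P)))"
    by (rule nuT_prefixT[OF s_nufuse.hyps(1) _ typingsS_no_actions]) simp_all
  also have "nuT n (typingsS (Cell S P)) = typingsS (Cell S (Nu n P))"
    using s_nufuse.hyps(2) by (simp add: typingsS_Nu typingsS_Cell nuT_joinT fresh_in_typingsM)
  also have "prefixT Af m ?e (typingsS (Cell S (Nu n P))) = typingsS (Fuse m S (Nu n P))"
    by (simp add: typingsS_Fuse)
  finally show ?case by simp
next
  case (s_par P P' Q Q')
  then show ?case by (simp add: typingsS_SPar)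
next
  case (s_cell S T P Q)
  then show ?case using eqM_typings[OF s_cell.hyps(1)] by (simp add: typingsS_Cell)
next
  case (s_pinch P Q n)
  then show ?case by (simp add: typingsS_Pinch)
next
  case (s_fuse S P T Q n)
  then show ?case by (simp add: typingsS_Fuse)
qed auto

theorem mainTheorem4:
  fixes P Q :: "('pp, 'ap) sys" and S T :: "'ap mem"
  assumes "eqS P Q" and "eqM S T"
  shows "(\<forall>G1 G2 \<tau>. tyS G1 G2 P \<tau> \<longleftrightarrow> tyS G1 G2 Q \<tau>) \<and>
         (\<forall>D1 D2 \<sigma>. tyM D1 D2 S \<sigma> \<longleftrightarrow> tyM D1 D2 T \<sigma>)"
proof -
  have "typingsS P = typingsS Q" using eqS_typings[OF assms(1)] by blast
  moreover have "typingsM S = typingsM T" using eqM_typings[OF assms(2)] by blast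
  ultimately show ?thesis unfolding typingsS_def typingsM_def by metis
qed

end
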